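(* Let $H$ be a finite-dimensional semisimple Hopf algebra over an algebraically closed field $k$ of characteristic $0$. The following are equivalent: (i) there exists a $1$-dimensional representation of $H$ whose character is faithful; (ii) $R(H)=k\langle\sigma\rangle$, the span of the powers of some grouplike element $\sigma$ of $H^*$; (iii) $H\cong(k\langle\sigma\rangle)^*$, i.e. $H^*$ is the group algebra of the cyclic group generated by some grouplike element $\sigma$ of $H^*$.
   Context: A character $\chi_V$ of a finite-dimensional left $H$-module $V$ is faithful if $\mathrm{LKer}_V=k1$, where $\mathrm{LKer}_V=\{h\in H\mid\sum h_1\otimes h_2\cdot v=h\otimes v\ \forall v\in V\}$. $R(H)\subset H^*$ is the span of the irreducible characters of $H$. *)

theory Defs
  imports "HOL-Computational_Algebra.Polynomial"
begin

text \<open>A finite-dimensional Hopf algebra H over a field 'k is encoded by its dimension n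
and its structure constants with respect to a basis e_0,...,e_(n-1):
  e_i e_j = sum_l hmu i j l e_l,   1 = sum_l heta l e_l,
  Delta e_i = sum_(j,l) hdelta i j l (e_j (x) e_l),   eps e_i = heps i,
  S e_i = sum_j hS i j e_j.
Elements of H (and of the dual H*) are coordinate functions nat => 'k vanishing
outside {..<n}; for the dual, f i is the value f(e_i).\<close>

record 'k hopf_data =
  hdim :: nat
  hmu :: "nat \<Rightarrow> nat \<Rightarrow> nat \<Rightarrow> 'k"
  heta :: "nat \<Rightarrow> 'k"
  hdelta :: "nat \<Rightarrow> nat \<Rightarrow> nat \<Rightarrow> 'k"
  heps :: "nat \<Rightarrow> 'k"
  hS :: "nat \<Rightarrow> nat \<Rightarrow> 'k"

definition kd :: "nat \<Rightarrow> nat \<Rightarrow> 'k::field" where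
  "kd i j = (if i = j then 1 else 0)"

definition alg_closed :: "'k::field itself \<Rightarrow> bool" where
  "alg_closed _ \<longleftrightarrow> (\<forall>p :: 'k poly. degree p > 0 \<longrightarrow> (\<exists>x. poly p x = 0))"

definition hopf_algebra :: "'k::field hopf_data \<Rightarrow> bool" where
  "hopf_algebra H \<longleftrightarrow> (let n = hdim H; m = hmu H; u = heta H; d = hdelta H;
       e = heps H; s = hS H in
    \<comment> \<open>associativity\<close>
    (\<forall>i<n. \<forall>j<n. \<forall>k<n. \<forall>l<n.
        (\<Sum>r<n. m i j r * m r k l) = (\<Sum>r<n. m j k r * m i r l)) \<and>
    \<comment> \<open>unit\<close>
    (\<forall>i<n. \<forall>l<n. (\<Sum>r<n. u r * m r i l) = kd i l \<and> (\<Sum>r<n. u r * m i r l) = kd i l) \<and>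
    \<comment> \<open>coassociativity\<close>
    (\<forall>i<n. \<forall>a<n. \<forall>b<n. \<forall>c<n.
        (\<Sum>r<n. d i r c * d r a b) = (\<Sum>r<n. d i a r * d r b c)) \<and>
    \<comment> \<open>counit\<close>
    (\<forall>i<n. \<forall>l<n. (\<Sum>j<n. e j * d i j l) = kd i l \<and> (\<Sum>j<n. e j * d i l j) = kd i l) \<and>
    \<comment> \<open>comultiplication is an algebra map\<close>
    (\<forall>i<n. \<forall>j<n. \<forall>a<n. \<forall>b<n.
        (\<Sum>r<n. m i j r * d r a b) =
        (\<Sum>p<n. \<Sum>q<n. \<Sum>r<n. \<Sum>t<n. d i p q * d j r t * m p r a * m q t b)) \<and>
    (\<forall>a<n. \<forall>b<n. (\<Sum>r<n. u r * d r a b) = u a * u b) \<and>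
    \<comment> \<open>counit is an algebra map\<close>
    (\<forall>i<n. \<forall>j<n. (\<Sum>r<n. m i j r * e r) = e i * e j) \<and>
    (\<Sum>r<n. u r * e r) = 1 \<and>
    \<comment> \<open>antipode axioms: m (S x id) Delta = eta eps = m (id x S) Delta\<close>
    (\<forall>i<n. \<forall>l<n.
        (\<Sum>p<n. \<Sum>q<n. \<Sum>r<n. d i p q * s p r * m r q l) = e i * u l \<and>
        (\<Sum>p<n. \<Sum>q<n. \<Sum>r<n. d i p q * s q r * m p r l) = e i * u l))"

definition vecs :: "nat \<Rightarrow> (nat \<Rightarrow> 'k::field) set" where
  "vecs d = {v. \<forall>a\<ge>d. v a = 0}"

text \<open>A d-dimensional left H-module: rho i is the d x d matrix of the action of e_i.\<close>
definition is_module :: "'k::field hopf_data \<Rightarrow> nat \<Rightarrow> (nat \<Rightarrow> nat \<Rightarrow> nat \<Rightarrow> 'k) \<Rightarrow> bool" where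
  "is_module H d rho \<longleftrightarrow>
     (\<forall>i<hdim H. \<forall>j<hdim H. \<forall>a<d. \<forall>b<d.
        (\<Sum>c<d. rho i a c * rho j c b) = (\<Sum>r<hdim H. hmu H i j r * rho r a b)) \<and>
     (\<forall>a<d. \<forall>b<d. (\<Sum>r<hdim H. heta H r * rho r a b) = kd a b)"

definition act :: "nat \<Rightarrow> (nat \<Rightarrow> nat \<Rightarrow> nat \<Rightarrow> 'k::field) \<Rightarrow> nat \<Rightarrow> (nat \<Rightarrow> 'k) \<Rightarrow> (nat \<Rightarrow> 'k)" where
  "act d rho i v = (\<lambda>a. if a < d then (\<Sum>b<d. rho i a b * v b) else 0)"

definition lin_subspace :: "nat \<Rightarrow> (nat \<Rightarrow> 'k::field) set \<Rightarrow> bool" where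
  "lin_subspace d W \<longleftrightarrow> W \<subseteq> vecs d \<and> (\<lambda>_. 0) \<in> W \<and>
     (\<forall>v\<in>W. \<forall>w\<in>W. (\<lambda>a. v a + w a) \<in> W) \<and> (\<forall>c. \<forall>v\<in>W. (\<lambda>a. c * v a) \<in> W)"

definition invariant :: "'k::field hopf_data \<Rightarrow> nat \<Rightarrow> (nat \<Rightarrow> nat \<Rightarrow> nat \<Rightarrow> 'k) \<Rightarrow> (nat \<Rightarrow> 'k) set \<Rightarrow> bool" where
  "invariant H d rho W \<longleftrightarrow> (\<forall>i<hdim H. \<forall>w\<in>W. act d rho i w \<in> W)"

definition submodule :: "'k::field hopf_data \<Rightarrow> nat \<Rightarrow> (nat \<Rightarrow> nat \<Rightarrow> nat \<Rightarrow> 'k) \<Rightarrow> (nat \<Rightarrow> 'k) set \<Rightarrow> bool" where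
  "submodule H d rho W \<longleftrightarrow> lin_subspace d W \<and> invariant H d rho W"

definition irreducible_module :: "'k::field hopf_data \<Rightarrow> nat \<Rightarrow> (nat \<Rightarrow> nat \<Rightarrow> nat \<Rightarrow> 'k) \<Rightarrow> bool" where
  "irreducible_module H d rho \<longleftrightarrow> is_module H d rho \<and> d > 0 \<and>
     (\<forall>W. submodule H d rho W \<longrightarrow> W = {\<lambda>_. 0} \<or> W = vecs d)"

definition semisimple :: "'k::field hopf_data \<Rightarrow> bool" where
  "semisimple H \<longleftrightarrow> (\<forall>d rho. is_module H d rho \<longrightarrow>
     (\<forall>W. submodule H d rho W \<longrightarrow>
        (\<exists>W'. submodule H d rho W' \<and> W \<inter> W' = {\<lambda>_. 0} \<and>
              {(\<lambda>a. w a + w' a) | w w'. w \<in> W \<and> w' \<in> W'} = vecs d)))"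

definition character :: "'k::field hopf_data \<Rightarrow> nat \<Rightarrow> (nat \<Rightarrow> nat \<Rightarrow> nat \<Rightarrow> 'k) \<Rightarrow> (nat \<Rightarrow> 'k)" where
  "character H d rho = (\<lambda>i. if i < hdim H then (\<Sum>a<d. rho i a a) else 0)"

definition hone :: "'k::field hopf_data \<Rightarrow> (nat \<Rightarrow> 'k)" where
  "hone H = (\<lambda>l. if l < hdim H then heta H l else 0)"

text \<open>LKer_V = {h | sum h_1 (x) h_2 . v = h (x) v for all v in V}, computed in coordinates of H (x) V.\<close>
definition LKer :: "'k::field hopf_data \<Rightarrow> nat \<Rightarrow> (nat \<Rightarrow> nat \<Rightarrow> nat \<Rightarrow> 'k) \<Rightarrow> (nat \<Rightarrow> 'k) set" where
  "LKer H d rho = {h \<in> vecs (hdim H). \<forall>v \<in> vecs d. \<forall>p<hdim H. \<forall>a<d.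
      (\<Sum>i<hdim H. h i * (\<Sum>q<hdim H. hdelta H i p q * (\<Sum>b<d. rho q a b * v b))) = h p * v a}"

definition faithful_char :: "'k::field hopf_data \<Rightarrow> nat \<Rightarrow> (nat \<Rightarrow> nat \<Rightarrow> nat \<Rightarrow> 'k) \<Rightarrow> bool" where
  "faithful_char H d rho \<longleftrightarrow> LKer H d rho = {(\<lambda>l. c * hone H l) | c. True}"

definition lin_span :: "(nat \<Rightarrow> 'k::field) set \<Rightarrow> (nat \<Rightarrow> 'k) set" where
  "lin_span X = {f. \<exists>S c. finite S \<and> S \<subseteq> X \<and> f = (\<lambda>i. \<Sum>x\<in>S. c x * x i)}"

definition RH :: "'k::field hopf_data \<Rightarrow> (nat \<Rightarrow> 'k) set" where
  "RH H = lin_span {character H d rho | d rho. irreducible_module H d rho}"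

definition conv :: "'k::field hopf_data \<Rightarrow> (nat \<Rightarrow> 'k) \<Rightarrow> (nat \<Rightarrow> 'k) \<Rightarrow> (nat \<Rightarrow> 'k)" where
  "conv H f g = (\<lambda>i. if i < hdim H then
      (\<Sum>p<hdim H. \<Sum>q<hdim H. hdelta H i p q * f p * g q) else 0)"

definition dual_one :: "'k::field hopf_data \<Rightarrow> (nat \<Rightarrow> 'k)" where
  "dual_one H = (\<lambda>i. if i < hdim H then heps H i else 0)"

definition dpow :: "'k::field hopf_data \<Rightarrow> (nat \<Rightarrow> 'k) \<Rightarrow> nat \<Rightarrow> (nat \<Rightarrow> 'k)" where
  "dpow H \<sigma> m = (conv H \<sigma> ^^ m) (dual_one H)"

text \<open>Grouplike in H*: Delta_{H*}(sigma) = sigma (x) sigma and eps_{H*}(sigma) = 1, i.e.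
sigma(e_i e_j) = sigma(e_i) sigma(e_j) and sigma(1) = 1.\<close>
definition grouplike_dual :: "'k::field hopf_data \<Rightarrow> (nat \<Rightarrow> 'k) \<Rightarrow> bool" where
  "grouplike_dual H \<sigma> \<longleftrightarrow> \<sigma> \<in> vecs (hdim H) \<and>
     (\<forall>i<hdim H. \<forall>j<hdim H. (\<Sum>r<hdim H. hmu H i j r * \<sigma> r) = \<sigma> i * \<sigma> j) \<and>
     (\<Sum>r<hdim H. heta H r * \<sigma> r) = 1"

end

theory Submission
  imports Defs "HOL-Library.Function_Algebras"
begin

text \<open>
  A one-dimensional module is the same as a grouplike \<open>\<sigma> \<in> H\<^sup>*\<close>, and its left kernel is the fixed
  space of the hit action \<open>h \<mapsto> h\<^sub>1 \<sigma>(h\<^sub>2)\<close>. Let \<open>I \<subseteq> H\<close> be the common kernel of the powers of \<open>\<sigma>\<close>.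
  These powers are algebra maps, so \<open>I\<close> is a two-sided ideal, and semisimplicity gives it a unit \<open>e\<close>;
  the powers span \<open>H\<^sup>*\<close> exactly when \<open>I = 0\<close>.

  If the character of \<open>\<sigma>\<close> is faithful: grouplikes are linearly independent, so there are finitely
  many and \<open>\<sigma>\<close> has finite order. Hence hitting with \<open>\<sigma>\<close> is an algebra automorphism of \<open>I\<close>, and it
  fixes the unit \<open>e\<close>. Faithfulness makes \<open>e\<close> a multiple of \<open>1\<close>, and \<open>\<epsilon>(e) = 0\<close> forces \<open>e = 0\<close>.

  If \<open>R(H)\<close> is spanned by the powers of \<open>\<sigma>\<close> but \<open>I \<noteq> 0\<close>, then \<open>I\<close> contains an irreducible module on
  which \<open>e\<close> acts as the identity. Its character lies in \<open>R(H)\<close>, so it vanishes on \<open>e\<close>, yet its value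
  at \<open>e\<close> is the dimension, which is nonzero in characteristic \<open>0\<close>.

  Conversely, if the powers of \<open>\<sigma>\<close> span \<open>H\<^sup>*\<close>, they are the characters of one-dimensional, hence
  irreducible, modules, and every fixed point of the hit action by \<open>\<sigma>\<close> is a multiple of \<open>1\<close>.
\<close>

section \<open>Coordinate vectors\<close>

definition vscale :: "'a::field \<Rightarrow> (nat \<Rightarrow> 'a) \<Rightarrow> nat \<Rightarrow> 'a" where
  "vscale c v = (\<lambda>i. c * v i)"

interpretation coords: vector_space "vscale :: 'a::field \<Rightarrow> (nat \<Rightarrow> 'a) \<Rightarrow> nat \<Rightarrow> 'a"
  by unfold_locales (auto simp: vscale_def fun_eq_iff algebra_simps)

lemma vscale_apply [simp]: "vscale c v i = c * v i"
  by (simp add: vscale_def)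

lemma sum_fun_apply: "(\<Sum>x\<in>S. f x) i = (\<Sum>x\<in>S. f x i)"
  for f :: "'b \<Rightarrow> nat \<Rightarrow> 'a::comm_monoid_add"
  by (induction S rule: infinite_finite_induct) auto

lemma sum_lessThan_delta:
  assumes "l < (n::nat)" shows "(\<Sum>j<n. x j * (if j = l then 1 else 0)) = (x l :: 'a::comm_semiring_1)"
proof -
  have "(\<Sum>j<n. x j * (if j = l then 1 else 0)) = (\<Sum>j<n. if j = l then x j else 0)"
    by (rule sum.cong) auto
  also have "\<dots> = x l" using assms by (subst sum.delta) auto
  finally show ?thesis .
qed

lemma sum_lessThan_delta': "l < (n::nat) \<Longrightarrow> (\<Sum>j<n. (if j = l then 1 else 0) * x j) = (x l :: 'a::comm_semiring_1)"
  using sum_lessThan_delta[of l n x] by (simp add: mult.commute)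

lemma sum_lessThan_cong: "(\<And>x. x < n \<Longrightarrow> g x = h x) \<Longrightarrow> sum g {..<(n::nat)} = sum h {..<n}"
  by (rule sum.cong) auto

definition basis_vec :: "nat \<Rightarrow> nat \<Rightarrow> 'a::field" where
  "basis_vec j = (\<lambda>i. if i = j then 1 else 0)"

lemma vecsD: "v \<in> vecs d \<Longrightarrow> \<not> i < d \<Longrightarrow> v i = 0"
  by (simp add: vecs_def)

lemma vecs_subspace: "coords.subspace (vecs d)"
  by (auto simp: coords.subspace_def vecs_def)

lemma basis_vec_vecs: "j < d \<Longrightarrow> basis_vec j \<in> vecs d"
  by (auto simp: basis_vec_def vecs_def)

lemma vecs_eq_sum_basis: "v \<in> vecs d \<Longrightarrow> v = (\<Sum>j<d. vscale (v j) (basis_vec j))"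
proof (rule ext)
  fix i assume "v \<in> vecs d"
  then show "v i = (\<Sum>j<d. vscale (v j) (basis_vec j)) i"
    by (cases "i < d") (auto simp: sum_fun_apply basis_vec_def vecs_def if_distrib cong: if_cong)
qed

lemma vecs_eq_span_basis: "vecs d = coords.span (basis_vec ` {..<d})"
proof
  show "vecs d \<subseteq> coords.span (basis_vec ` {..<d})"
  proof
    fix v assume "v \<in> vecs d"
    moreover have "(\<Sum>j<d. vscale (v j) (basis_vec j)) \<in> coords.span (basis_vec ` {..<d})"
      by (intro coords.span_sum coords.span_scale coords.span_base) auto
    ultimately show "v \<in> coords.span (basis_vec ` {..<d})"
      using vecs_eq_sum_basis by metis
  qed
  show "coords.span (basis_vec ` {..<d}) \<subseteq> vecs d"
    by (rule coords.span_minimal) (auto simp: vecs_subspace basis_vec_vecs)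
qed

lemma card_basis_vecs: "card (basis_vec ` {..<d} :: (nat \<Rightarrow> 'a::field) set) = d"
proof -
  have "inj (basis_vec :: nat \<Rightarrow> nat \<Rightarrow> 'a)"
    by (auto simp: inj_def basis_vec_def fun_eq_iff split: if_splits)
  then show ?thesis by (simp add: card_image inj_on_subset)
qed

lemma lin_span_eq_span: "lin_span X = coords.span X"
  unfolding lin_span_def coords.span_explicit by (auto simp: fun_eq_iff sum_fun_apply)

lemma lin_subspace_iff: "lin_subspace d W \<longleftrightarrow> W \<subseteq> vecs d \<and> coords.subspace W"
  by (auto simp: lin_subspace_def coords.subspace_def zero_fun_def plus_fun_def vscale_def)

lemma vecs_sum: "(\<And>a. a \<in> A \<Longrightarrow> f a \<in> vecs d) \<Longrightarrow> (\<Sum>a\<in>A. f a) \<in> vecs d"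
  using coords.subspace_sum[OF vecs_subspace] by blast

lemma vecs_vscale: "v \<in> vecs d \<Longrightarrow> vscale c v \<in> vecs d"
  by (simp add: vecs_def)

lemma span_subset_span_independent:
  assumes "coords.independent B" "B \<subseteq> coords.span S" "finite S" "card S \<le> card B"
  shows "coords.span S \<subseteq> coords.span B"
proof
  fix v assume v: "v \<in> coords.span S"
  show "v \<in> coords.span B"
  proof (rule ccontr)
    assume v_notin: "v \<notin> coords.span B"
    have "finite B" using coords.independent_span_bound[OF assms(3,1,2)] by auto
    have "coords.independent (insert v B)" using v_notin assms(1) by (rule coords.independent_insertI)
    moreover have "insert v B \<subseteq> coords.span S" using assms(2) v by auto
    ultimately have "card (insert v B) \<le> card S" using coords.independent_span_bound[OF assms(3)] by blast
    moreover have "v \<notin> B" using v_notin coords.span_base by blast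
    ultimately show False using \<open>finite B\<close> assms(4) by simp
  qed
qed

lemma finite_basis_of_subset_vecs:
  assumes "W \<subseteq> vecs d"
  obtains B where "B \<subseteq> W" "coords.independent B" "W \<subseteq> coords.span B" "finite B" "card B \<le> d"
proof -
  obtain B where B: "B \<subseteq> W" "coords.independent B" "W \<subseteq> coords.span B"
    using coords.maximal_independent_subset[of W] by blast
  have "B \<subseteq> coords.span (basis_vec ` {..<d})" using B(1) assms vecs_eq_span_basis by blast
  then have "finite B \<and> card B \<le> card (basis_vec ` {..<d} :: (nat \<Rightarrow> 'a) set)"
    using coords.independent_span_bound[OF _ B(2)] by blast
  then show ?thesis using that B card_basis_vecs[of d, where 'a='a] by auto
qed

lemma card_le_if_only_trivial_relation:
  fixes v :: "nat \<Rightarrow> nat \<Rightarrow> 'a::field"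
  assumes v: "\<And>i. i < m \<Longrightarrow> v i \<in> vecs r"
    and trivial: "\<And>a. (\<Sum>i<m. vscale (a i) (v i)) = 0 \<Longrightarrow> \<forall>i<m. a i = 0"
  shows "m \<le> r"
proof -
  have inj: "inj_on v {..<m}"
  proof (rule inj_onI, rule ccontr)
    fix i i' assume "i \<in> {..<m}" "i' \<in> {..<m}" "v i = v i'" "i \<noteq> i'"
    define a where "a k = (if k = i then 1 else if k = i' then -1 else (0::'a))" for k
    have "vscale (a k) (v k) = (if k = i then v k else 0) - (if k = i' then v k else 0)" for k
      using \<open>i \<noteq> i'\<close> by (auto simp: a_def fun_eq_iff)
    then have "(\<Sum>k<m. vscale (a k) (v k)) = (\<Sum>k<m. if k = i then v k else 0) - (\<Sum>k<m. if k = i' then v k else 0)"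
      by (simp add: sum_subtractf)
    also have "\<dots> = 0" using \<open>i \<in> {..<m}\<close> \<open>i' \<in> {..<m}\<close> \<open>v i = v i'\<close> by simp
    finally have "a i = 0" using trivial \<open>i \<in> {..<m}\<close> by blast
    then show False by (simp add: a_def)
  qed
  have "coords.independent (v ` {..<m})"
  proof (rule coords.independent_if_scalars_zero)
    fix f x assume "(\<Sum>x\<in>v ` {..<m}. vscale (f x) x) = 0" "x \<in> v ` {..<m}"
    then show "f x = 0" using trivial[of "f \<circ> v"] by (auto simp: sum.reindex[OF inj])
  qed simp
  moreover have "v ` {..<m} \<subseteq> coords.span (basis_vec ` {..<r})"
    using v vecs_eq_span_basis by blast
  ultimately have "card (v ` {..<m}) \<le> card (basis_vec ` {..<r} :: (nat \<Rightarrow> 'a) set)"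
    using coords.independent_span_bound by blast
  then show ?thesis using card_image[OF inj] card_basis_vecs[of r, where 'a='a] by simp
qed

lemma card_independent_lt:
  assumes "coords.independent B" "B \<subseteq> W" "W \<subseteq> vecs d" "coords.subspace W" "W \<noteq> vecs d"
  shows "card B < d"
proof -
  have B_span: "B \<subseteq> coords.span (basis_vec ` {..<d})" using assms(2,3) vecs_eq_span_basis by blast
  then have "finite B \<and> card B \<le> card (basis_vec ` {..<d} :: (nat \<Rightarrow> 'a) set)"
    by (rule coords.independent_span_bound[OF finite_imageI[OF finite_lessThan] assms(1)])
  then have "card B \<le> d" by (simp add: card_basis_vecs)
  moreover have "card B \<noteq> d"
  proof
    assume "card B = d"
    then have "vecs d \<subseteq> coords.span B"
      using span_subset_span_independent[OF assms(1) B_span finite_imageI[OF finite_lessThan]]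
      by (simp add: card_basis_vecs vecs_eq_span_basis)
    then show False using coords.span_minimal[OF assms(2,4)] assms(3,5) by blast
  qed
  ultimately show ?thesis by simp
qed

lemma card_pos_if_span_nonzero: "finite B \<Longrightarrow> W \<subseteq> coords.span B \<Longrightarrow> \<not> W \<subseteq> {0} \<Longrightarrow> 0 < card B"
  by (cases "B = {}") auto

definition coord_of :: "(nat \<Rightarrow> nat \<Rightarrow> 'a::field) \<Rightarrow> (nat \<Rightarrow> 'a) set \<Rightarrow> (nat \<Rightarrow> 'a) \<Rightarrow> nat \<Rightarrow> 'a" where
  "coord_of \<beta> B w = (\<lambda>a. if a < card B then coords.representation B w (\<beta> a) else 0)"

lemma sum_coord_of:
  assumes B: "coords.independent B" "bij_betw \<beta> {..<card B} B" and w: "w \<in> coords.span B"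
  shows "(\<Sum>b<card B. vscale (coord_of \<beta> B w b) (\<beta> b)) = w"
proof -
  have "finite B" using bij_betw_finite[OF B(2)] by simp
  have "(\<Sum>b<card B. vscale (coord_of \<beta> B w b) (\<beta> b)) = (\<Sum>x\<in>B. vscale (coords.representation B w x) x)"
    using sum.reindex_bij_betw[OF B(2), of "\<lambda>x. vscale (coords.representation B w x) x"]
    by (simp add: coord_of_def)
  also have "\<dots> = w" using coords.sum_representation_eq[OF B(1) w \<open>finite B\<close>] by simp
  finally show ?thesis .
qed

lemma coord_of_linear:
  assumes "coords.independent B" "\<And>x. x \<in> A \<Longrightarrow> f x \<in> coords.span B"
  shows "coord_of \<beta> B (\<Sum>x\<in>A. vscale (c x) (f x)) = (\<Sum>x\<in>A. vscale (c x) (coord_of \<beta> B (f x)))"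
proof -
  let ?R = "coords.representation B"
  have "?R (\<Sum>x\<in>A. vscale (c x) (f x)) = (\<lambda>b. \<Sum>x\<in>A. ?R (vscale (c x) (f x)) b)"
    using assms by (intro coords.representation_sum coords.span_scale)
  also have "\<dots> = (\<lambda>b. \<Sum>x\<in>A. c x * ?R (f x) b)"
    using assms by (simp add: coords.representation_scale)
  finally show ?thesis by (auto simp: coord_of_def fun_eq_iff sum_fun_apply)
qed

lemma coord_of_sum:
  assumes B: "coords.independent B" "bij_betw \<beta> {..<card B} B" and v: "v \<in> vecs (card B)"
  shows "coord_of \<beta> B (\<Sum>b<card B. vscale (v b) (\<beta> b)) = v"
proof
  fix a
  have \<beta>: "\<beta> b \<in> B" if "b < card B" for b using B(2) that by (auto simp: bij_betw_def)
  have "coord_of \<beta> B (\<Sum>b<card B. vscale (v b) (\<beta> b)) = (\<Sum>b<card B. vscale (v b) (coord_of \<beta> B (\<beta> b)))"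
    using \<beta> by (intro coord_of_linear B(1)) (simp add: coords.span_base)
  also have "\<dots> = (\<Sum>b<card B. vscale (v b) (basis_vec b))"
    using B \<beta> by (intro sum_lessThan_cong)
      (auto simp: coord_of_def basis_vec_def coords.representation_basis bij_betw_def inj_on_def fun_eq_iff)
  also have "\<dots> = v" using vecs_eq_sum_basis[OF v] by simp
  finally show "coord_of \<beta> B (\<Sum>b<card B. vscale (v b) (\<beta> b)) a = v a" by simp
qed

section \<open>The algebra \<open>H\<close> and its dual\<close>

locale hopf =
  fixes H :: "'k::field_char_0 hopf_data"
  assumes hopf: "hopf_algebra H"
begin

abbreviation "N \<equiv> hdim H"
abbreviation "\<mu> \<equiv> hmu H"
abbreviation "\<eta> \<equiv> heta H"
abbreviation "\<delta> \<equiv> hdelta H"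
abbreviation "\<epsilon> \<equiv> heps H"

lemmas hopf_axioms_unfolded = hopf[unfolded hopf_algebra_def Let_def]

lemma coeff_assoc: "i<N \<Longrightarrow> j<N \<Longrightarrow> k<N \<Longrightarrow> l<N \<Longrightarrow>
    (\<Sum>r<N. \<mu> i j r * \<mu> r k l) = (\<Sum>r<N. \<mu> j k r * \<mu> i r l)"
  using hopf_axioms_unfolded by simp

lemma coeff_unit_left: "i<N \<Longrightarrow> l<N \<Longrightarrow> (\<Sum>r<N. \<eta> r * \<mu> r i l) = kd i l"
  using hopf_axioms_unfolded by simp

lemma coeff_unit_right: "i<N \<Longrightarrow> l<N \<Longrightarrow> (\<Sum>r<N. \<eta> r * \<mu> i r l) = kd i l"
  using hopf_axioms_unfolded by simp

lemma coeff_coassoc: "i<N \<Longrightarrow> a<N \<Longrightarrow> b<N \<Longrightarrow> c<N \<Longrightarrow>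
    (\<Sum>r<N. \<delta> i r c * \<delta> r a b) = (\<Sum>r<N. \<delta> i a r * \<delta> r b c)"
  using hopf_axioms_unfolded by simp

lemma coeff_counit_left: "i<N \<Longrightarrow> l<N \<Longrightarrow> (\<Sum>j<N. \<epsilon> j * \<delta> i j l) = kd i l"
  using hopf_axioms_unfolded by simp

lemma coeff_counit_right: "i<N \<Longrightarrow> l<N \<Longrightarrow> (\<Sum>j<N. \<epsilon> j * \<delta> i l j) = kd i l"
  using hopf_axioms_unfolded by simp

lemma coeff_comult_mult: "i<N \<Longrightarrow> j<N \<Longrightarrow> a<N \<Longrightarrow> b<N \<Longrightarrow>
    (\<Sum>r<N. \<mu> i j r * \<delta> r a b) =
    (\<Sum>p<N. \<Sum>q<N. \<Sum>r<N. \<Sum>t<N. \<delta> i p q * \<delta> j r t * \<mu> p r a * \<mu> q t b)"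
  using hopf_axioms_unfolded by simp

lemma coeff_comult_unit: "a<N \<Longrightarrow> b<N \<Longrightarrow> (\<Sum>r<N. \<eta> r * \<delta> r a b) = \<eta> a * \<eta> b"
  using hopf_axioms_unfolded by simp

lemma coeff_counit_mult: "i<N \<Longrightarrow> j<N \<Longrightarrow> (\<Sum>r<N. \<mu> i j r * \<epsilon> r) = \<epsilon> i * \<epsilon> j"
  using hopf_axioms_unfolded by simp

lemma coeff_counit_unit: "(\<Sum>r<N. \<eta> r * \<epsilon> r) = 1"
  using hopf_axioms_unfolded by simp

lemma coeff_antipode: "i<N \<Longrightarrow> l<N \<Longrightarrow>
    (\<Sum>p<N. \<Sum>q<N. \<Sum>r<N. \<delta> i p q * hS H q r * \<mu> p r l) = \<epsilon> i * \<eta> l"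
  using hopf_axioms_unfolded by simp

definition hmul :: "(nat \<Rightarrow> 'k) \<Rightarrow> (nat \<Rightarrow> 'k) \<Rightarrow> nat \<Rightarrow> 'k" where
  "hmul x y = (\<lambda>l. if l < N then (\<Sum>i<N. \<Sum>j<N. x i * y j * \<mu> i j l) else 0)"

lemma hone_vecs: "hone H \<in> vecs N"
  by (simp add: hone_def vecs_def)

lemma hmul_vecs: "hmul x y \<in> vecs N"
  by (simp add: hmul_def vecs_def)

lemma hmul_assoc: "hmul (hmul x y) z = hmul x (hmul y z)"
proof (rule ext)
  fix l
  show "hmul (hmul x y) z l = hmul x (hmul y z) l"
  proof (cases "l < N")
    case True
    have "hmul (hmul x y) z l = (\<Sum>r<N. \<Sum>k<N. (\<Sum>i<N. \<Sum>j<N. x i * y j * \<mu> i j r) * z k * \<mu> r k l)"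
      using True by (simp add: hmul_def)
    also have "\<dots> = (\<Sum>i<N. \<Sum>j<N. \<Sum>k<N. x i * y j * z k * (\<Sum>r<N. \<mu> i j r * \<mu> r k l))"
      apply (simp only: sum_distrib_left sum_distrib_right sum.cartesian_product)
      apply (rule sum.reindex_bij_witness[where i="\<lambda>(i,j,k,r). (r,k,i,j)" and j="\<lambda>(r,k,i,j). (i,j,k,r)"])
      by (auto simp: mult_ac)
    also have "\<dots> = (\<Sum>i<N. \<Sum>j<N. \<Sum>k<N. x i * y j * z k * (\<Sum>r<N. \<mu> j k r * \<mu> i r l))"
      using True by (intro sum.cong refl) (simp add: coeff_assoc)
    also have "\<dots> = (\<Sum>i<N. \<Sum>r<N. x i * (\<Sum>j<N. \<Sum>k<N. y j * z k * \<mu> j k r) * \<mu> i r l)"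
      apply (simp only: sum_distrib_left sum_distrib_right sum.cartesian_product)
      apply (rule sum.reindex_bij_witness[where i="\<lambda>(i,r,j,k). (i,j,k,r)" and j="\<lambda>(i,j,k,r). (i,r,j,k)"])
      by (auto simp: mult_ac)
    also have "\<dots> = hmul x (hmul y z) l"
      using True by (simp add: hmul_def)
    finally show ?thesis .
  qed (simp add: hmul_def)
qed

lemma hmul_hone_left: assumes "x \<in> vecs N" shows "hmul (hone H) x = x"
proof (rule ext)
  fix l
  show "hmul (hone H) x l = x l"
  proof (cases "l < N")
    case True
    have "hmul (hone H) x l = (\<Sum>j<N. x j * (\<Sum>i<N. \<eta> i * \<mu> i j l))"
      using True by (simp add: hmul_def hone_def sum_distrib_left mult_ac) (rule sum.swap)
    also have "\<dots> = (\<Sum>j<N. x j * kd j l)"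
      using True by (intro sum.cong refl) (simp add: coeff_unit_left)
    also have "\<dots> = x l" using True by (simp add: kd_def sum_lessThan_delta)
    finally show ?thesis .
  qed (use assms in \<open>simp add: hmul_def vecs_def\<close>)
qed

lemma hmul_hone_right: assumes "x \<in> vecs N" shows "hmul x (hone H) = x"
proof (rule ext)
  fix l
  show "hmul x (hone H) l = x l"
  proof (cases "l < N")
    case True
    have "hmul x (hone H) l = (\<Sum>i<N. x i * (\<Sum>j<N. \<eta> j * \<mu> i j l))"
      using True by (simp add: hmul_def hone_def sum_distrib_left mult_ac)
    also have "\<dots> = (\<Sum>i<N. x i * kd i l)"
      using True by (intro sum.cong refl) (simp add: coeff_unit_right)
    also have "\<dots> = x l" using True by (simp add: kd_def sum_lessThan_delta)
    finally show ?thesis .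
  qed (use assms in \<open>simp add: hmul_def vecs_def\<close>)
qed

lemma hmul_add_left: "hmul (x + y) z = hmul x z + hmul y z"
  by (auto simp: hmul_def fun_eq_iff algebra_simps sum.distrib)

lemma hmul_add_right: "hmul z (x + y) = hmul z x + hmul z y"
  by (auto simp: hmul_def fun_eq_iff algebra_simps sum.distrib)

lemma hmul_vscale_left: "hmul (vscale c x) z = vscale c (hmul x z)"
  by (auto simp: hmul_def fun_eq_iff sum_distrib_left mult_ac)

lemma hmul_zero_left [simp]: "hmul 0 z = 0"
  by (auto simp: hmul_def fun_eq_iff)

lemma hmul_zero_right [simp]: "hmul z 0 = 0"
  by (auto simp: hmul_def fun_eq_iff)

lemma hmul_diff_left: "hmul (x - y) z = hmul x z - hmul y z"
  by (auto simp: hmul_def fun_eq_iff algebra_simps sum_subtractf)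

lemma hmul_diff_right: "hmul z (x - y) = hmul z x - hmul z y"
  by (auto simp: hmul_def fun_eq_iff algebra_simps sum_subtractf)

lemma hmul_sum_left: "hmul (\<Sum>a\<in>A. f a) z = (\<Sum>a\<in>A. hmul (f a) z)"
proof (induction A rule: infinite_finite_induct)
  case (insert x F)
  then show ?case by (simp only: sum.insert[OF insert(1,2)] hmul_add_left insert(3))
qed (simp_all add: hmul_def fun_eq_iff)

lemma hmul_basis_vec:
  assumes "i < N" "j < N" shows "hmul (basis_vec i) (basis_vec j) = (\<lambda>l. if l < N then \<mu> i j l else 0)"
proof (rule ext)
  fix l
  show "hmul (basis_vec i) (basis_vec j) l = (if l < N then \<mu> i j l else 0)"
  proof (cases "l < N")
    case True
    have "hmul (basis_vec i) (basis_vec j) l = (\<Sum>a<N. basis_vec i a * (\<Sum>b<N. basis_vec j b * \<mu> a b l))"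
      using True by (simp add: hmul_def sum_distrib_left mult_ac)
    also have "\<dots> = \<mu> i j l"
      using assms by (simp add: basis_vec_def sum_lessThan_delta')
    finally show ?thesis using True by simp
  qed (simp add: hmul_def)
qed

lemma hmul_eq_sum_basis: "hmul h w = (\<Sum>i<N. vscale (h i) (hmul (basis_vec i) w))"
proof -
  define h' where "h' = (\<lambda>i. if i < N then h i else 0)"
  have "h' \<in> vecs N" by (simp add: h'_def vecs_def)
  have "hmul h w = hmul h' w"
    by (auto simp: hmul_def h'_def fun_eq_iff intro!: sum.cong)
  also have "\<dots> = hmul (\<Sum>i<N. vscale (h' i) (basis_vec i)) w"
    using vecs_eq_sum_basis[OF \<open>h' \<in> vecs N\<close>] by (rule arg_cong)
  also have "\<dots> = (\<Sum>i<N. vscale (h i) (hmul (basis_vec i) w))"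
    by (simp add: hmul_sum_left hmul_vscale_left h'_def)
  finally show ?thesis .
qed

definition pairing :: "(nat \<Rightarrow> 'k) \<Rightarrow> (nat \<Rightarrow> 'k) \<Rightarrow> 'k" where
  "pairing f x = (\<Sum>i<N. f i * x i)"

lemma pairing_zero_right [simp]: "pairing f 0 = 0"
  by (simp add: pairing_def)

lemma pairing_add_right: "pairing f (x + y) = pairing f x + pairing f y"
  by (simp add: pairing_def algebra_simps sum.distrib)

lemma pairing_diff_right: "pairing f (x - y) = pairing f x - pairing f y"
  by (simp add: pairing_def algebra_simps sum_subtractf)

lemma pairing_vscale_right: "pairing f (vscale c x) = c * pairing f x"
  by (simp add: pairing_def sum_distrib_left mult_ac)

lemma pairing_vscale_left: "pairing (vscale c f) x = c * pairing f x"
  by (simp add: pairing_def sum_distrib_left mult_ac)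

lemma pairing_sum_left: "pairing (\<Sum>a\<in>A. f a) x = (\<Sum>a\<in>A. pairing (f a) x)"
  by (simp add: pairing_def sum_fun_apply sum_distrib_right) (rule sum.swap)

lemma pairing_basis_vec_right: "p < N \<Longrightarrow> pairing f (basis_vec p) = f p"
  by (simp add: pairing_def basis_vec_def sum_lessThan_delta)

lemma pairing_basis_vec_left: "p < N \<Longrightarrow> pairing (basis_vec p) f = f p"
  by (simp add: pairing_def basis_vec_def sum_lessThan_delta')

lemma pairing_span_eq_0:
  assumes "g \<in> coords.span B" "\<And>b. b \<in> B \<Longrightarrow> pairing b h = 0"
  shows "pairing g h = 0"
proof -
  from assms(1) obtain t r where "finite t" "t \<subseteq> B" "g = (\<Sum>a\<in>t. vscale (r a) a)"
    unfolding coords.span_explicit by blast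
  then show ?thesis using assms(2) by (auto simp: pairing_sum_left pairing_vscale_left intro!: sum.neutral)
qed

lemma vecs_eqI_pairing_left:
  assumes "x \<in> vecs N" "y \<in> vecs N" "\<And>f. f \<in> vecs N \<Longrightarrow> pairing f x = pairing f y"
  shows "x = y"
proof
  fix p show "x p = y p"
    using assms(3)[OF basis_vec_vecs] assms(1,2)
    by (cases "p < N") (simp_all add: pairing_basis_vec_left vecsD)
qed

lemma vecs_eqI_pairing_right:
  assumes "f \<in> vecs N" "g \<in> vecs N" "\<And>x. x \<in> vecs N \<Longrightarrow> pairing f x = pairing g x"
  shows "f = g"
proof
  fix p show "f p = g p"
    using assms(3)[OF basis_vec_vecs] assms(1,2)
    by (cases "p < N") (simp_all add: pairing_basis_vec_right vecsD)
qed

lemma dual_one_vecs: "dual_one H \<in> vecs N"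
  by (simp add: dual_one_def vecs_def)

lemma conv_vecs: "conv H f g \<in> vecs N"
  by (simp add: conv_def vecs_def)

lemma conv_assoc: "conv H (conv H a b) c = conv H a (conv H b c)"
proof (rule ext)
  fix i show "conv H (conv H a b) c i = conv H a (conv H b c) i"
  proof (cases "i < N")
    case True
    have "conv H (conv H a b) c i = (\<Sum>p<N. \<Sum>q<N. \<delta> i p q * (\<Sum>r<N. \<Sum>s<N. \<delta> p r s * a r * b s) * c q)"
      using True by (simp add: conv_def)
    also have "\<dots> = (\<Sum>r<N. \<Sum>s<N. \<Sum>q<N. a r * b s * c q * (\<Sum>p<N. \<delta> i p q * \<delta> p r s))"
      apply (simp only: sum_distrib_left sum_distrib_right sum.cartesian_product)
      apply (rule sum.reindex_bij_witness[where i="\<lambda>(r,s,q,p). (p,q,r,s)" and j="\<lambda>(p,q,r,s). (r,s,q,p)"])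
      by (auto simp: mult_ac)
    also have "\<dots> = (\<Sum>r<N. \<Sum>s<N. \<Sum>q<N. a r * b s * c q * (\<Sum>p<N. \<delta> i r p * \<delta> p s q))"
      using True by (intro sum.cong refl) (simp add: coeff_coassoc)
    also have "\<dots> = (\<Sum>r<N. \<Sum>p<N. \<delta> i r p * a r * (\<Sum>s<N. \<Sum>q<N. \<delta> p s q * b s * c q))"
      apply (simp only: sum_distrib_left sum_distrib_right sum.cartesian_product)
      apply (rule sum.reindex_bij_witness[where i="\<lambda>(r,p,s,q). (r,s,q,p)" and j="\<lambda>(r,s,q,p). (r,p,s,q)"])
      by (auto simp: mult_ac)
    also have "\<dots> = conv H a (conv H b c) i"
      using True by (simp add: conv_def)
    finally show ?thesis .
  qed (simp add: conv_def)
qed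

lemma conv_dual_one_left: assumes "f \<in> vecs N" shows "conv H (dual_one H) f = f"
proof (rule ext)
  fix i show "conv H (dual_one H) f i = f i"
  proof (cases "i < N")
    case True
    have "conv H (dual_one H) f i = (\<Sum>q<N. f q * (\<Sum>p<N. \<epsilon> p * \<delta> i p q))"
      using True by (simp add: conv_def dual_one_def sum_distrib_left mult_ac) (rule sum.swap)
    also have "\<dots> = (\<Sum>q<N. f q * kd i q)"
      using True by (intro sum.cong refl) (simp add: coeff_counit_left)
    also have "\<dots> = f i" using True by (simp add: kd_def eq_commute[of i] sum_lessThan_delta)
    finally show ?thesis .
  qed (use assms in \<open>simp add: conv_def vecs_def\<close>)
qed

lemma conv_dual_one_right: assumes "f \<in> vecs N" shows "conv H f (dual_one H) = f"
proof (rule ext)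
  fix i show "conv H f (dual_one H) i = f i"
  proof (cases "i < N")
    case True
    have "conv H f (dual_one H) i = (\<Sum>p<N. f p * (\<Sum>q<N. \<epsilon> q * \<delta> i p q))"
      using True by (simp add: conv_def dual_one_def sum_distrib_left mult_ac)
    also have "\<dots> = (\<Sum>p<N. f p * kd i p)"
      using True by (intro sum.cong refl) (simp add: coeff_counit_right)
    also have "\<dots> = f i" using True by (simp add: kd_def eq_commute[of i] sum_lessThan_delta)
    finally show ?thesis .
  qed (use assms in \<open>simp add: conv_def vecs_def\<close>)
qed

text \<open>The hit action \<open>g \<rightharpoonup> h = h\<^sub>1 g(h\<^sub>2)\<close> of \<open>H\<^sup>*\<close> on \<open>H\<close>, the transpose of convolution by \<open>g\<close>.\<close>

definition hit :: "(nat \<Rightarrow> 'k) \<Rightarrow> (nat \<Rightarrow> 'k) \<Rightarrow> nat \<Rightarrow> 'k" where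
  "hit g h = (\<lambda>p. if p < N then (\<Sum>i<N. h i * (\<Sum>q<N. \<delta> i p q * g q)) else 0)"

lemma hit_vecs: "hit g h \<in> vecs N"
  by (simp add: hit_def vecs_def)

lemma pairing_conv: "pairing (conv H f g) h = pairing f (hit g h)"
proof -
  have "pairing (conv H f g) h = (\<Sum>i<N. (\<Sum>p<N. \<Sum>q<N. \<delta> i p q * f p * g q) * h i)"
    by (simp add: pairing_def conv_def)
  also have "\<dots> = (\<Sum>p<N. f p * (\<Sum>i<N. h i * (\<Sum>q<N. \<delta> i p q * g q)))"
    apply (simp only: sum_distrib_left sum_distrib_right sum.cartesian_product)
    apply (rule sum.reindex_bij_witness[where i="\<lambda>(p,i,q). (i,p,q)" and j="\<lambda>(i,p,q). (p,i,q)"])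
    by (auto simp: mult_ac)
  also have "\<dots> = pairing f (hit g h)" by (simp add: pairing_def hit_def)
  finally show ?thesis .
qed

lemma hit_dual_one: assumes "h \<in> vecs N" shows "hit (dual_one H) h = h"
proof (rule ext)
  fix p show "hit (dual_one H) h p = h p"
  proof (cases "p < N")
    case True
    have "hit (dual_one H) h p = (\<Sum>i<N. h i * (\<Sum>q<N. \<epsilon> q * \<delta> i p q))"
      using True by (simp add: hit_def dual_one_def mult_ac)
    also have "\<dots> = (\<Sum>i<N. h i * kd i p)"
      using True by (intro sum.cong refl) (simp add: coeff_counit_right)
    also have "\<dots> = h p" using True by (simp add: kd_def sum_lessThan_delta)
    finally show ?thesis .
  qed (use assms in \<open>simp add: hit_def vecs_def\<close>)
qed

lemma hit_hit: "hit f (hit g h) = hit (conv H f g) h"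
  by (rule vecs_eqI_pairing_left[OF hit_vecs hit_vecs]) (simp add: pairing_conv[symmetric] conv_assoc)

lemma hit_vscale: "hit g (vscale c x) = vscale c (hit g x)"
  by (auto simp: hit_def fun_eq_iff sum_distrib_left mult_ac)

section \<open>Grouplike elements of the dual\<close>

abbreviation "grouplike \<equiv> grouplike_dual H"

lemma grouplike_vecs: "grouplike \<sigma> \<Longrightarrow> \<sigma> \<in> vecs N"
  by (simp add: grouplike_dual_def)

lemma grouplike_coeff: "grouplike \<sigma> \<Longrightarrow> i < N \<Longrightarrow> j < N \<Longrightarrow> (\<Sum>r<N. \<mu> i j r * \<sigma> r) = \<sigma> i * \<sigma> j"
  by (simp add: grouplike_dual_def)

lemma pairing_hmul: assumes "grouplike \<sigma>" shows "pairing \<sigma> (hmul x y) = pairing \<sigma> x * pairing \<sigma> y"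
proof -
  have "pairing \<sigma> (hmul x y) = (\<Sum>l<N. \<sigma> l * (\<Sum>i<N. \<Sum>j<N. x i * y j * \<mu> i j l))"
    by (simp add: pairing_def hmul_def)
  also have "\<dots> = (\<Sum>i<N. \<Sum>j<N. x i * y j * (\<Sum>l<N. \<mu> i j l * \<sigma> l))"
    apply (simp only: sum_distrib_left sum_distrib_right sum.cartesian_product)
    apply (rule sum.reindex_bij_witness[where i="\<lambda>(i,j,l). (l,i,j)" and j="\<lambda>(l,i,j). (i,j,l)"])
    by (auto simp: mult_ac)
  also have "\<dots> = (\<Sum>i<N. \<Sum>j<N. x i * y j * (\<sigma> i * \<sigma> j))"
    by (intro sum.cong refl) (simp add: grouplike_coeff[OF assms])
  also have "\<dots> = pairing \<sigma> x * pairing \<sigma> y"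
    by (simp add: pairing_def sum_product mult_ac)
  finally show ?thesis .
qed

lemma pairing_hone: "grouplike \<sigma> \<Longrightarrow> pairing \<sigma> (hone H) = 1"
  by (simp add: grouplike_dual_def pairing_def hone_def mult.commute)

lemma grouplikeI:
  assumes "\<sigma> \<in> vecs N" "\<And>x y. pairing \<sigma> (hmul x y) = pairing \<sigma> x * pairing \<sigma> y"
    and "pairing \<sigma> (hone H) = 1"
  shows "grouplike \<sigma>"
  unfolding grouplike_dual_def
proof (intro conjI allI impI)
  fix i j assume "i < N" "j < N"
  then have "pairing \<sigma> (hmul (basis_vec i) (basis_vec j)) = (\<Sum>r<N. \<mu> i j r * \<sigma> r)"
    by (simp add: hmul_basis_vec pairing_def mult.commute cong: if_cong)
  then show "(\<Sum>r<N. \<mu> i j r * \<sigma> r) = \<sigma> i * \<sigma> j"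
    using assms(2)[of "basis_vec i" "basis_vec j"] \<open>i < N\<close> \<open>j < N\<close> by (simp add: pairing_basis_vec_right)
next
  show "(\<Sum>r<N. \<eta> r * \<sigma> r) = 1" using assms(3) by (simp add: pairing_def hone_def mult.commute)
qed (fact assms(1))

lemma grouplike_dual_one: "grouplike (dual_one H)"
proof -
  have "(\<Sum>r<N. f r * (if r < N then \<epsilon> r else 0)) = (\<Sum>r<N. f r * \<epsilon> r)" for f :: "nat \<Rightarrow> 'k"
    by (rule sum_lessThan_cong) simp
  then show ?thesis
    unfolding grouplike_dual_def
    by (simp add: vecs_def dual_one_def coeff_counit_mult coeff_counit_unit)
qed

lemma hit_hmul: assumes "grouplike g" shows "hit g (hmul x y) = hmul (hit g x) (hit g y)"
proof (rule ext)
  fix a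
  show "hit g (hmul x y) a = hmul (hit g x) (hit g y) a"
  proof (cases "a < N")
    case True
    have "hit g (hmul x y) a = (\<Sum>l<N. (\<Sum>i<N. \<Sum>j<N. x i * y j * \<mu> i j l) * (\<Sum>b<N. \<delta> l a b * g b))"
      using True by (simp add: hit_def hmul_def)
    also have "\<dots> = (\<Sum>i<N. \<Sum>j<N. \<Sum>b<N. x i * y j * g b * (\<Sum>l<N. \<mu> i j l * \<delta> l a b))"
      apply (simp only: sum_distrib_left sum_distrib_right sum.cartesian_product)
      apply (rule sum.reindex_bij_witness[where i="\<lambda>(i,j,b,l). (l,b,i,j)" and j="\<lambda>(l,b,i,j). (i,j,b,l)"])
      by (auto simp: mult_ac)
    also have "\<dots> = (\<Sum>i<N. \<Sum>j<N. \<Sum>b<N. x i * y j * g b *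
        (\<Sum>p<N. \<Sum>q<N. \<Sum>r<N. \<Sum>t<N. \<delta> i p q * \<delta> j r t * \<mu> p r a * \<mu> q t b))"
      using True by (intro sum.cong refl) (simp add: coeff_comult_mult)
    also have "\<dots> = (\<Sum>i<N. \<Sum>j<N. \<Sum>p<N. \<Sum>q<N. \<Sum>r<N. \<Sum>t<N.
        x i * y j * \<delta> i p q * \<delta> j r t * \<mu> p r a * (\<Sum>b<N. \<mu> q t b * g b))"
      apply (simp only: sum_distrib_left sum_distrib_right sum.cartesian_product)
      apply (rule sum.reindex_bij_witness[where i="\<lambda>(i,j,p,q,r,t,b). (i,j,b,p,q,r,t)" and j="\<lambda>(i,j,b,p,q,r,t). (i,j,p,q,r,t,b)"])
      by (auto simp: mult_ac)
    also have "\<dots> = (\<Sum>i<N. \<Sum>j<N. \<Sum>p<N. \<Sum>q<N. \<Sum>r<N. \<Sum>t<N.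
        x i * y j * \<delta> i p q * \<delta> j r t * \<mu> p r a * (g q * g t))"
      by (intro sum.cong refl) (simp add: grouplike_coeff[OF assms])
    also have "\<dots> = (\<Sum>p<N. \<Sum>r<N. \<Sum>i<N. \<Sum>j<N. \<Sum>q<N. \<Sum>t<N.
        x i * \<delta> i p q * g q * (y j * \<delta> j r t * g t) * \<mu> p r a)"
      apply (simp only: sum.cartesian_product)
      apply (rule sum.reindex_bij_witness[where i="\<lambda>(p,r,i,j,q,t). (i,j,p,q,r,t)" and j="\<lambda>(i,j,p,q,r,t). (p,r,i,j,q,t)"])
      by (auto simp: mult_ac)
    also have "\<dots> = (\<Sum>p<N. \<Sum>r<N. (\<Sum>i<N. \<Sum>q<N. x i * \<delta> i p q * g q) *
        (\<Sum>j<N. \<Sum>t<N. y j * \<delta> j r t * g t) * \<mu> p r a)"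
      by (simp only: sum_product) (simp only: sum_distrib_right)
    also have "\<dots> = hmul (hit g x) (hit g y) a"
      using True by (simp add: hit_def hmul_def sum_distrib_left mult.assoc)
    finally show ?thesis .
  qed (simp add: hit_def hmul_def)
qed

lemma hit_hone: assumes "grouplike g" shows "hit g (hone H) = hone H"
proof (rule ext)
  fix p show "hit g (hone H) p = hone H p"
  proof (cases "p < N")
    case True
    have "hit g (hone H) p = (\<Sum>q<N. g q * (\<Sum>i<N. \<eta> i * \<delta> i p q))"
      using True by (simp add: hit_def hone_def sum_distrib_left mult_ac) (rule sum.swap)
    also have "\<dots> = (\<Sum>q<N. g q * (\<eta> p * \<eta> q))"
      using True by (intro sum.cong refl) (simp add: coeff_comult_unit)
    also have "\<dots> = \<eta> p * pairing g (hone H)"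
      by (simp add: pairing_def hone_def sum_distrib_left mult_ac)
    also have "\<dots> = hone H p" using True pairing_hone[OF assms] by (simp add: hone_def)
    finally show ?thesis .
  qed (simp add: hit_def hone_def)
qed

lemma grouplike_conv: assumes "grouplike f" "grouplike g" shows "grouplike (conv H f g)"
  by (rule grouplikeI)
     (simp_all add: conv_vecs pairing_conv hit_hmul hit_hone assms pairing_hmul pairing_hone)

lemma dpow_0: "dpow H \<sigma> 0 = dual_one H"
  by (simp add: dpow_def)

lemma dpow_Suc: "dpow H \<sigma> (Suc m) = conv H \<sigma> (dpow H \<sigma> m)"
  by (simp add: dpow_def)

lemma dpow_vecs: "dpow H \<sigma> m \<in> vecs N"
  by (cases m) (simp_all add: dpow_0 dpow_Suc dual_one_vecs conv_vecs)

lemma dpow_add: "dpow H \<sigma> (a + b) = conv H (dpow H \<sigma> a) (dpow H \<sigma> b)"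
  by (induction a) (simp_all add: dpow_0 dpow_Suc conv_dual_one_left dpow_vecs conv_assoc)

lemma dpow_1: "\<sigma> \<in> vecs N \<Longrightarrow> dpow H \<sigma> 1 = \<sigma>"
  using dpow_Suc[of \<sigma> 0] by (simp add: dpow_0 conv_dual_one_right)

lemma dpow_Suc': "\<sigma> \<in> vecs N \<Longrightarrow> dpow H \<sigma> (Suc m) = conv H (dpow H \<sigma> m) \<sigma>"
  using dpow_add[of \<sigma> m 1] by (simp add: dpow_Suc dpow_0 conv_dual_one_right)

lemma grouplike_dpow: "grouplike \<sigma> \<Longrightarrow> grouplike (dpow H \<sigma> m)"
  by (induction m) (simp_all add: dpow_0 dpow_Suc grouplike_dual_one grouplike_conv)

text \<open>Artin's argument for the independence of characters: shifting a relation by \<open>\<tau>\<close> removes \<open>\<tau>\<close>.\<close>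

lemma grouplike_relation_shift:
  assumes S: "S \<subseteq> {\<sigma>. grouplike \<sigma>}" and rel: "(\<Sum>\<sigma>\<in>S. vscale (u \<sigma>) \<sigma>) = 0" and "grouplike \<tau>"
  shows "(\<Sum>\<sigma>\<in>S. vscale (u \<sigma> * (pairing \<sigma> x - pairing \<tau> x)) \<sigma>) = 0"
proof (rule vecs_eqI_pairing_right)
  show "(\<Sum>\<sigma>\<in>S. vscale (u \<sigma> * (pairing \<sigma> x - pairing \<tau> x)) \<sigma>) \<in> vecs N"
    using S by (intro vecs_sum vecs_vscale grouplike_vecs) auto
  show "0 \<in> vecs N" by (simp add: vecs_def)
  have rel_at: "(\<Sum>\<sigma>\<in>S. u \<sigma> * pairing \<sigma> z) = 0" for z
    using arg_cong[OF rel, of "\<lambda>f. pairing f z"]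
    by (simp only: pairing_sum_left pairing_vscale_left) (simp add: pairing_def)
  have mult: "(\<Sum>\<sigma>\<in>S. u \<sigma> * pairing \<sigma> (hmul x y)) = (\<Sum>\<sigma>\<in>S. u \<sigma> * (pairing \<sigma> x * pairing \<sigma> y))" for y
    using S by (intro sum.cong) (auto simp: pairing_hmul)
  fix y
  have "pairing (\<Sum>\<sigma>\<in>S. vscale (u \<sigma> * (pairing \<sigma> x - pairing \<tau> x)) \<sigma>) y
      = (\<Sum>\<sigma>\<in>S. u \<sigma> * (pairing \<sigma> x - pairing \<tau> x) * pairing \<sigma> y)"
    by (simp only: pairing_sum_left pairing_vscale_left)
  also have "\<dots> = (\<Sum>\<sigma>\<in>S. u \<sigma> * pairing \<sigma> (hmul x y)) - pairing \<tau> x * (\<Sum>\<sigma>\<in>S. u \<sigma> * pairing \<sigma> y)"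
    by (simp add: mult sum_distrib_left sum_subtractf algebra_simps)
  also have "\<dots> = pairing 0 y" unfolding rel_at by (simp add: pairing_def)
  finally show "pairing (\<Sum>\<sigma>\<in>S. vscale (u \<sigma> * (pairing \<sigma> x - pairing \<tau> x)) \<sigma>) y = pairing 0 y" .
qed

lemma grouplike_combination_eq_0:
  assumes "finite S" "S \<subseteq> {\<sigma>. grouplike \<sigma>}" "(\<Sum>\<sigma>\<in>S. vscale (u \<sigma>) \<sigma>) = 0" "\<tau> \<in> S"
  shows "u \<tau> = 0"
  using assms
proof (induction S arbitrary: u \<tau> rule: finite_induct)
  case (insert g S)
  have g: "grouplike g" and S: "S \<subseteq> {\<sigma>. grouplike \<sigma>}" using insert.prems(1) by auto
  have shift: "(\<Sum>\<sigma>\<in>S. vscale (u \<sigma> * (pairing \<sigma> x - pairing g x)) \<sigma>) = 0" for x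
    using grouplike_relation_shift[OF insert.prems(1,2) g, of x] insert.hyps by simp
  have shifted: "u \<sigma> * (pairing \<sigma> x - pairing g x) = 0" if "\<sigma> \<in> S" for \<sigma> x
    using insert.IH[OF S shift that] .
  have u_S: "u \<sigma> = 0" if "\<sigma> \<in> S" for \<sigma>
  proof -
    have "\<sigma> \<noteq> g" using that insert.hyps by auto
    then obtain p where p: "\<sigma> p \<noteq> g p" by (auto simp: fun_eq_iff)
    moreover have "p < N"
      using p vecsD[OF grouplike_vecs[OF g]] vecsD[of \<sigma>] grouplike_vecs S that by fastforce
    ultimately show ?thesis using shifted[OF that, of "basis_vec p"] by (simp add: pairing_basis_vec_right)
  qed
  have "(\<Sum>\<sigma>\<in>insert g S. u \<sigma> * pairing \<sigma> (hone H)) = 0"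
    using arg_cong[OF insert.prems(2), of "\<lambda>f. pairing f (hone H)"]
    by (simp only: pairing_sum_left pairing_vscale_left) (simp add: pairing_def)
  then have "u g = 0"
    using insert.hyps u_S pairing_hone[OF g] by simp
  then show ?case using u_S insert.prems(3) by auto
qed simp

lemma grouplikes_independent: "coords.independent {\<sigma>. grouplike \<sigma>}"
  unfolding coords.independent_explicit_finite_subsets
  using grouplike_combination_eq_0 by blast

lemma finite_grouplikes: "finite {\<sigma>. grouplike \<sigma>}"
proof -
  have "{\<sigma>. grouplike \<sigma>} \<subseteq> coords.span (basis_vec ` {..<N})"
    using grouplike_vecs vecs_eq_span_basis by blast
  then show ?thesis
    using coords.independent_span_bound[OF finite_imageI[OF finite_lessThan] grouplikes_independent] by blast
qed

definition antipode_dual :: "(nat \<Rightarrow> 'k) \<Rightarrow> nat \<Rightarrow> 'k" where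
  "antipode_dual \<sigma> = (\<lambda>p. if p < N then (\<Sum>r<N. hS H p r * \<sigma> r) else 0)"

lemma antipode_dual_vecs: "antipode_dual \<sigma> \<in> vecs N"
  by (simp add: antipode_dual_def vecs_def)

lemma conv_antipode_dual: assumes "grouplike \<sigma>" shows "conv H \<sigma> (antipode_dual \<sigma>) = dual_one H"
proof (rule ext)
  fix i
  show "conv H \<sigma> (antipode_dual \<sigma>) i = dual_one H i"
  proof (cases "i < N")
    case True
    have "conv H \<sigma> (antipode_dual \<sigma>) i = (\<Sum>p<N. \<Sum>q<N. \<Sum>r<N. \<delta> i p q * hS H q r * (\<sigma> p * \<sigma> r))"
      using True by (simp add: conv_def antipode_dual_def sum_distrib_left mult_ac)
    also have "\<dots> = (\<Sum>p<N. \<Sum>q<N. \<Sum>r<N. \<delta> i p q * hS H q r * (\<Sum>l<N. \<mu> p r l * \<sigma> l))"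
      by (intro sum.cong refl) (simp add: grouplike_coeff[OF assms])
    also have "\<dots> = (\<Sum>l<N. \<sigma> l * (\<Sum>p<N. \<Sum>q<N. \<Sum>r<N. \<delta> i p q * hS H q r * \<mu> p r l))"
      apply (simp only: sum_distrib_left sum_distrib_right sum.cartesian_product)
      apply (rule sum.reindex_bij_witness[where i="\<lambda>(l,p,q,r). (p,q,r,l)" and j="\<lambda>(p,q,r,l). (l,p,q,r)"])
      by (auto simp: mult_ac)
    also have "\<dots> = (\<Sum>l<N. \<sigma> l * (\<epsilon> i * \<eta> l))"
      using True by (intro sum.cong refl) (simp add: coeff_antipode)
    also have "\<dots> = \<epsilon> i * pairing \<sigma> (hone H)"
      by (simp add: pairing_def hone_def sum_distrib_left mult_ac)
    also have "\<dots> = dual_one H i" using True pairing_hone[OF assms] by (simp add: dual_one_def)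
    finally show ?thesis .
  qed (simp add: conv_def dual_one_def)
qed

lemma conv_dpow_antipode_dual:
  assumes "grouplike \<sigma>" shows "conv H (dpow H \<sigma> m) (dpow H (antipode_dual \<sigma>) m) = dual_one H"
proof (induction m)
  case (Suc m)
  have "conv H (dpow H \<sigma> (Suc m)) (dpow H (antipode_dual \<sigma>) (Suc m))
      = conv H \<sigma> (conv H (conv H (dpow H \<sigma> m) (dpow H (antipode_dual \<sigma>) m)) (antipode_dual \<sigma>))"
    by (simp add: dpow_Suc[of \<sigma>] dpow_Suc'[OF antipode_dual_vecs] conv_assoc)
  also have "\<dots> = dual_one H"
    using Suc by (simp add: conv_dual_one_left antipode_dual_vecs conv_antipode_dual assms)
  finally show ?case .
qed (simp add: dpow_0 conv_dual_one_left dual_one_vecs)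

lemma grouplike_finite_order: assumes "grouplike \<sigma>" shows "\<exists>m>0. dpow H \<sigma> m = dual_one H"
proof -
  have "finite (range (dpow H \<sigma>))"
    using grouplike_dpow[OF assms] by (intro finite_subset[OF _ finite_grouplikes]) auto
  then have "\<not> inj (dpow H \<sigma>)"
    using finite_imageD infinite_UNIV_nat by blast
  then obtain a b where "a < b" and ab: "dpow H \<sigma> a = dpow H \<sigma> b"
    unfolding inj_def by (metis linorder_neqE_nat)
  let ?inv = "dpow H (antipode_dual \<sigma>) a"
  have "dual_one H = conv H (dpow H \<sigma> b) ?inv"
    using conv_dpow_antipode_dual[OF assms, of a] ab by simp
  also have "\<dots> = conv H (dpow H \<sigma> (b - a)) (conv H (dpow H \<sigma> a) ?inv)"
    using dpow_add[of \<sigma> "b - a" a] \<open>a < b\<close> by (simp add: conv_assoc)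
  also have "\<dots> = dpow H \<sigma> (b - a)"
    by (simp add: conv_dpow_antipode_dual[OF assms] conv_dual_one_right dpow_vecs)
  finally show ?thesis using \<open>a < b\<close> by (intro exI[of _ "b - a"]) auto
qed

section \<open>Ideals of a semisimple Hopf algebra\<close>

definition left_ideal :: "(nat \<Rightarrow> 'k) set \<Rightarrow> bool" where
  "left_ideal W \<longleftrightarrow> W \<subseteq> vecs N \<and> coords.subspace W \<and> (\<forall>h w. w \<in> W \<longrightarrow> hmul h w \<in> W)"

definition left_regular :: "nat \<Rightarrow> nat \<Rightarrow> nat \<Rightarrow> 'k" where
  "left_regular i a b = \<mu> i b a"

lemma act_left_regular: "i < N \<Longrightarrow> act N left_regular i v = hmul (basis_vec i) v"
proof (rule ext)
  fix a assume "i < N"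
  show "act N left_regular i v a = hmul (basis_vec i) v a"
  proof (cases "a < N")
    case True
    have "hmul (basis_vec i) v a = (\<Sum>x<N. basis_vec i x * (\<Sum>y<N. v y * \<mu> x y a))"
      using True by (simp add: hmul_def sum_distrib_left mult_ac)
    also have "\<dots> = (\<Sum>y<N. v y * \<mu> i y a)"
      using \<open>i < N\<close> by (simp add: basis_vec_def sum_lessThan_delta')
    finally show ?thesis using True by (simp add: act_def left_regular_def mult.commute)
  qed (simp add: act_def hmul_def)
qed

lemma left_regular_module: "is_module H N left_regular"
  unfolding is_module_def
proof (intro conjI allI impI)
  fix i j a b assume "i < N" "j < N" "a < N" "b < N"
  then show "(\<Sum>c<N. left_regular i a c * left_regular j c b) = (\<Sum>r<N. \<mu> i j r * left_regular r a b)"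
    using coeff_assoc[of i j b a] by (simp add: left_regular_def mult.commute)
next
  fix a b assume "a < N" "b < N"
  then show "(\<Sum>r<N. \<eta> r * left_regular r a b) = kd a b"
    using coeff_unit_left[of b a] by (simp add: left_regular_def kd_def eq_commute)
qed

lemma submodule_left_regular_iff: "submodule H N left_regular W \<longleftrightarrow> left_ideal W"
proof
  assume W: "submodule H N left_regular W"
  then have sub: "W \<subseteq> vecs N" "coords.subspace W" by (auto simp: submodule_def lin_subspace_iff)
  have "hmul h w \<in> W" if "w \<in> W" for h w
  proof -
    have "\<And>i. i < N \<Longrightarrow> hmul (basis_vec i) w \<in> W"
      using W that by (auto simp: submodule_def invariant_def act_left_regular[symmetric])
    then show ?thesis
      by (subst hmul_eq_sum_basis) (intro coords.subspace_sum[OF sub(2)] coords.subspace_scale[OF sub(2)]; simp)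
  qed
  with sub show "left_ideal W" by (auto simp: left_ideal_def)
qed (auto simp: left_ideal_def submodule_def lin_subspace_iff invariant_def act_left_regular)

lemma left_ideal_complement:
  assumes "semisimple H" "left_ideal W"
  obtains e e' W' where "e \<in> W" "left_ideal W'" "e' \<in> W'" "W \<inter> W' = {0}" "hone H = e + e'"
proof -
  have "submodule H N left_regular W" using assms(2) by (simp add: submodule_left_regular_iff)
  then have "\<exists>W'. submodule H N left_regular W' \<and> W \<inter> W' = {\<lambda>_. 0} \<and>
      {(\<lambda>a. w a + w' a) | w w'. w \<in> W \<and> w' \<in> W'} = vecs N"
    by (rule assms(1)[unfolded semisimple_def, rule_format, OF left_regular_module])
  then obtain W' where W': "submodule H N left_regular W'" "W \<inter> W' = {\<lambda>_. 0}"
      "{(\<lambda>a. w a + w' a) | w w'. w \<in> W \<and> w' \<in> W'} = vecs N"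
    by meson
  have "hone H \<in> {(\<lambda>a. w a + w' a) | w w'. w \<in> W \<and> w' \<in> W'}"
    using W'(3) hone_vecs by simp
  then obtain e e' where "e \<in> W" "e' \<in> W'" "hone H = (\<lambda>a. e a + e' a)"
    by blast
  moreover have "left_ideal W'" "W \<inter> W' = {0}"
    using W'(1,2) by (simp_all add: submodule_left_regular_iff zero_fun_def)
  ultimately show ?thesis using that[of e W' e'] unfolding plus_fun_def by blast
qed

lemma left_ideal_right_unit:
  assumes "semisimple H" "left_ideal L"
  shows "\<exists>e\<in>L. \<forall>x\<in>L. hmul x e = x"
proof -
  obtain e e' W' where e: "e \<in> L" "left_ideal W'" "e' \<in> W'" "L \<inter> W' = {0}" "hone H = e + e'"
    using left_ideal_complement[OF assms] .
  have "hmul x e = x" if "x \<in> L" for x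
  proof -
    have x: "x \<in> vecs N" using assms(2) that by (auto simp: left_ideal_def)
    have "hmul x e' = x - hmul x e"
      using hmul_hone_right[OF x] e(5) by (simp add: hmul_add_right) (metis add_diff_cancel_left')
    moreover have "x - hmul x e \<in> L"
      using assms(2) that e(1) by (auto simp: left_ideal_def intro: coords.subspace_diff)
    moreover have "hmul x e' \<in> W'" using e(2,3) by (simp add: left_ideal_def)
    ultimately have "x - hmul x e \<in> L \<inter> W'" by simp
    then show ?thesis using e(4) by simp
  qed
  with e(1) show ?thesis by blast
qed

lemma left_ideal_square_zero:
  assumes "semisimple H" "left_ideal L" "\<And>a b. a \<in> L \<Longrightarrow> b \<in> L \<Longrightarrow> hmul a b = 0"
  shows "L \<subseteq> {0}"
proof -
  obtain e where e: "e \<in> L" "\<And>x. x \<in> L \<Longrightarrow> hmul x e = x"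
    using left_ideal_right_unit[OF assms(1,2)] by blast
  then have "e = 0" using assms(3) by metis
  then show ?thesis using e(2) by auto
qed

lemma left_ideal_range_hmul: "left_ideal (range (\<lambda>h. hmul h y))"
  unfolding left_ideal_def coords.subspace_def
proof (intro conjI allI impI ballI)
  show "range (\<lambda>h. hmul h y) \<subseteq> vecs N" by (auto simp: hmul_vecs)
  show "0 \<in> range (\<lambda>h. hmul h y)" using hmul_zero_left by (metis rangeI)
  fix a b assume "a \<in> range (\<lambda>h. hmul h y)" "b \<in> range (\<lambda>h. hmul h y)"
  then obtain ha hb where "a = hmul ha y" "b = hmul hb y" by blast
  then show "a + b \<in> range (\<lambda>h. hmul h y)" using hmul_add_left[of ha hb y] by (metis rangeI)
next
  fix c a assume "a \<in> range (\<lambda>h. hmul h y)"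
  then obtain ha where "a = hmul ha y" by blast
  then show "vscale c a \<in> range (\<lambda>h. hmul h y)" using hmul_vscale_left[of c ha y] by (metis rangeI)
next
  fix h w assume "w \<in> range (\<lambda>h. hmul h y)"
  then obtain hw where "w = hmul hw y" by blast
  then show "hmul h w \<in> range (\<lambda>h. hmul h y)" using hmul_assoc[of h hw y] by (metis rangeI)
qed

text \<open>A two-sided ideal \<open>I\<close> of a semisimple algebra has a unit: if \<open>e\<close> is a right unit and
  \<open>x \<in> I\<close>, then \<open>y = (1 - e) x\<close> satisfies \<open>y H y = 0\<close>, so \<open>H y\<close> is a left ideal of square zero.\<close>

lemma ideal_unit:
  assumes ss: "semisimple H" and I: "left_ideal I" and right: "\<And>x h. x \<in> I \<Longrightarrow> hmul x h \<in> I"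
  shows "\<exists>e\<in>I. \<forall>x\<in>I. hmul x e = x \<and> hmul e x = x"
proof -
  obtain e where e: "e \<in> I" "\<And>x. x \<in> I \<Longrightarrow> hmul x e = x"
    using left_ideal_right_unit[OF ss I] by blast
  have I_vecs: "x \<in> vecs N" if "x \<in> I" for x using I that by (auto simp: left_ideal_def)
  have "hmul e x = x" if x: "x \<in> I" for x
  proof -
    define y where "y = hmul (hone H - e) x"
    have annih: "hmul z (hone H - e) = 0" if "z \<in> I" for z
      using e(2)[OF that] hmul_hone_right[OF I_vecs[OF that]] by (simp add: hmul_diff_right)
    have "hmul y (hmul h y) = 0" for h
      using annih[OF right[OF x, of h]] by (simp add: y_def hmul_assoc[symmetric]) (simp add: hmul_assoc)
    then have "range (\<lambda>h. hmul h y) \<subseteq> {0}"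
      by (intro left_ideal_square_zero[OF ss left_ideal_range_hmul]) (auto simp: hmul_assoc)
    moreover have "y \<in> range (\<lambda>h. hmul h y)"
      using hmul_hone_left[of y] hmul_vecs unfolding y_def by (metis rangeI)
    ultimately have "y = 0" by blast
    then show ?thesis
      using hmul_hone_left[OF I_vecs[OF x]] by (simp add: y_def hmul_diff_left)
  qed
  with e show ?thesis by blast
qed

definition annihilator :: "(nat \<Rightarrow> 'k) set \<Rightarrow> (nat \<Rightarrow> 'k) set" where
  "annihilator G = {x \<in> vecs N. \<forall>g\<in>G. pairing g x = 0}"

lemma left_ideal_annihilator: assumes "G \<subseteq> {\<sigma>. grouplike \<sigma>}" shows "left_ideal (annihilator G)"
  unfolding left_ideal_def
proof (intro conjI allI impI)
  show "annihilator G \<subseteq> vecs N" by (auto simp: annihilator_def)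
  show "coords.subspace (annihilator G)"
    by (auto simp: coords.subspace_def annihilator_def pairing_add_right pairing_vscale_right vecs_def)
  fix h w assume "w \<in> annihilator G"
  then show "hmul h w \<in> annihilator G" using assms by (auto simp: annihilator_def hmul_vecs pairing_hmul)
qed

lemma annihilator_hmul_right: "G \<subseteq> {\<sigma>. grouplike \<sigma>} \<Longrightarrow> x \<in> annihilator G \<Longrightarrow> hmul x h \<in> annihilator G"
  by (auto simp: annihilator_def hmul_vecs pairing_hmul)

text \<open>For a basis \<open>B\<close> of \<open>span G\<close>, the vectors \<open>(b(e\<^sub>i))\<^sub>b\<^sub>\<in>\<^sub>B \<in> k\<^bsup>|B|\<^esup>\<close> (\<open>i < N\<close>) admit only the trivial
  relation, since a relation is an element of \<open>H\<close> annihilated by \<open>G\<close>; hence \<open>N \<le> |B|\<close>.\<close>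

lemma span_eq_vecs_if_annihilator_trivial:
  assumes G: "G \<subseteq> vecs N" and ann: "annihilator G \<subseteq> {0}"
  shows "coords.span G = vecs N"
proof -
  obtain B where B: "B \<subseteq> G" "coords.independent B" "G \<subseteq> coords.span B" "finite B"
    by (rule finite_basis_of_subset_vecs[OF G])
  obtain \<beta> where \<beta>: "bij_betw \<beta> {..<card B} B"
    using ex_bij_betw_nat_finite[OF B(4)] unfolding atLeast0LessThan by blast
  define c where "c i = (\<lambda>j. if j < card B then \<beta> j i else 0)" for i
  have "N \<le> card B"
  proof (rule card_le_if_only_trivial_relation)
    show "c i \<in> vecs (card B)" for i by (simp add: c_def vecs_def)
    fix a assume rel: "(\<Sum>i<N. vscale (a i) (c i)) = 0"
    define h where "h = (\<lambda>i. if i < N then a i else 0)"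
    have "pairing b h = 0" if "b \<in> B" for b
    proof -
      obtain j where j: "j < card B" "b = \<beta> j" using \<beta> \<open>b \<in> B\<close> by (auto simp: bij_betw_def)
      have "0 = (\<Sum>i<N. vscale (a i) (c i)) j" using rel by simp
      also have "\<dots> = (\<Sum>i<N. a i * \<beta> j i)" using j by (simp add: sum_fun_apply c_def)
      also have "\<dots> = pairing b h" by (simp add: pairing_def h_def j mult.commute)
      finally show ?thesis by simp
    qed
    then have "pairing g h = 0" if "g \<in> G" for g
      using B(3) that by (auto intro!: pairing_span_eq_0[of g B h])
    then have "h \<in> annihilator G" by (simp add: annihilator_def h_def vecs_def)
    then have "h = 0" using ann by blast
    then show "\<forall>i<N. a i = 0" by (metis h_def zero_fun_apply)
  qed
  moreover have "B \<subseteq> coords.span (basis_vec ` {..<N})" using B(1) G vecs_eq_span_basis by blast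
  ultimately have "vecs N \<subseteq> coords.span B"
    using span_subset_span_independent[OF B(2) _ finite_imageI[OF finite_lessThan], of basis_vec N]
    by (simp add: card_basis_vecs vecs_eq_span_basis)
  then show ?thesis
    using coords.span_mono[OF B(1)] coords.span_minimal[OF G vecs_subspace] by blast
qed

end

section \<open>Modules\<close>

lemma act_vscale: "act d rho i (vscale c v) = vscale c (act d rho i v)"
  by (auto simp: act_def fun_eq_iff sum_distrib_left mult_ac)

lemma act_sum: "act d rho i (\<Sum>x\<in>A. f x) = (\<Sum>x\<in>A. act d rho i (f x))"
proof
  fix a show "act d rho i (\<Sum>x\<in>A. f x) a = (\<Sum>x\<in>A. act d rho i (f x)) a"
    by (cases "a < d") (simp_all add: act_def sum_fun_apply sum_distrib_left sum.swap[of _ A])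
qed

lemma act_basis_vec: "a < d \<Longrightarrow> b < d \<Longrightarrow> act d rho i (basis_vec b) a = rho i a b"
  by (simp add: act_def basis_vec_def sum_lessThan_delta)

definition restrict_module ::
    "nat \<Rightarrow> (nat \<Rightarrow> nat \<Rightarrow> nat \<Rightarrow> 'a::field) \<Rightarrow> (nat \<Rightarrow> nat \<Rightarrow> 'a) \<Rightarrow> (nat \<Rightarrow> 'a) set \<Rightarrow> nat \<Rightarrow> nat \<Rightarrow> nat \<Rightarrow> 'a"
  where "restrict_module d rho \<beta> B i a b = coord_of \<beta> B (act d rho i (\<beta> b)) a"

lemma act_restrict_module:
  assumes B: "coords.independent B" "bij_betw \<beta> {..<card B} B"
    and inv: "\<And>w. w \<in> coords.span B \<Longrightarrow> act d rho i w \<in> coords.span B"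
  shows "act (card B) (restrict_module d rho \<beta> B) i v
    = coord_of \<beta> B (act d rho i (\<Sum>b<card B. vscale (v b) (\<beta> b)))"
proof -
  have \<beta>: "\<beta> b \<in> coords.span B" if "b < card B" for b
    using B(2) that by (auto simp: bij_betw_def intro: coords.span_base)
  have "coord_of \<beta> B (act d rho i (\<Sum>b<card B. vscale (v b) (\<beta> b)))
      = coord_of \<beta> B (\<Sum>b<card B. vscale (v b) (act d rho i (\<beta> b)))"
    by (simp add: act_sum act_vscale)
  also have "\<dots> = (\<Sum>b<card B. vscale (v b) (coord_of \<beta> B (act d rho i (\<beta> b))))"
    using inv \<beta> by (intro coord_of_linear B(1)) auto
  finally have sum: "coord_of \<beta> B (act d rho i (\<Sum>b<card B. vscale (v b) (\<beta> b)))
      = (\<Sum>b<card B. vscale (v b) (coord_of \<beta> B (act d rho i (\<beta> b))))" .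
  show ?thesis
  proof
    fix a show "act (card B) (restrict_module d rho \<beta> B) i v a
        = coord_of \<beta> B (act d rho i (\<Sum>b<card B. vscale (v b) (\<beta> b))) a"
      unfolding sum
      by (cases "a < card B") (simp_all add: act_def restrict_module_def sum_fun_apply mult.commute coord_of_def)
  qed
qed

lemma sum_act_restrict_module:
  assumes B: "coords.independent B" "bij_betw \<beta> {..<card B} B"
    and inv: "\<And>i w. i \<in> A \<Longrightarrow> w \<in> coords.span B \<Longrightarrow> act d rho i w \<in> coords.span B"
  shows "(\<Sum>i\<in>A. vscale (c i) (act (card B) (restrict_module d rho \<beta> B) i v))
    = coord_of \<beta> B (\<Sum>i\<in>A. vscale (c i) (act d rho i (\<Sum>b<card B. vscale (v b) (\<beta> b))))"
proof -
  let ?v = "\<Sum>b<card B. vscale (v b) (\<beta> b)"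
  have "?v \<in> coords.span B"
    using B(2) by (intro coords.span_sum coords.span_scale coords.span_base) (auto simp: bij_betw_def)
  then have "coord_of \<beta> B (\<Sum>i\<in>A. vscale (c i) (act d rho i ?v))
      = (\<Sum>i\<in>A. vscale (c i) (coord_of \<beta> B (act d rho i ?v)))"
    using inv by (intro coord_of_linear B(1)) auto
  also have "\<dots> = (\<Sum>i\<in>A. vscale (c i) (act (card B) (restrict_module d rho \<beta> B) i v))"
    using inv by (intro sum.cong refl) (simp add: act_restrict_module[OF B])
  finally show ?thesis by simp
qed

lemma restrict_module_acts_as_identity:
  assumes B: "coords.independent B" "bij_betw \<beta> {..<card B} B"
    and inv: "\<And>i w. i \<in> A \<Longrightarrow> w \<in> coords.span B \<Longrightarrow> act d rho i w \<in> coords.span B"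
    and c: "\<And>w. w \<in> coords.span B \<Longrightarrow> (\<Sum>i\<in>A. vscale (c i) (act d rho i w)) = w"
    and v: "v \<in> vecs (card B)"
  shows "(\<Sum>i\<in>A. vscale (c i) (act (card B) (restrict_module d rho \<beta> B) i v)) = v"
proof -
  have "(\<Sum>b<card B. vscale (v b) (\<beta> b)) \<in> coords.span B"
    using B(2) by (intro coords.span_sum coords.span_scale coords.span_base) (auto simp: bij_betw_def)
  then show ?thesis by (simp add: sum_act_restrict_module[OF B inv] c coord_of_sum[OF B v])
qed

context hopf
begin

lemma module_act_act:
  assumes m: "is_module H d rho" and "i < N" "j < N"
  shows "act d rho i (act d rho j v) = (\<Sum>r<N. vscale (\<mu> i j r) (act d rho r v))"
proof
  fix a
  show "act d rho i (act d rho j v) a = (\<Sum>r<N. vscale (\<mu> i j r) (act d rho r v)) a"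
  proof (cases "a < d")
    case True
    have "act d rho i (act d rho j v) a = (\<Sum>b<d. (\<Sum>c<d. rho i a c * rho j c b) * v b)"
      using True by (simp add: act_def sum_distrib_left sum_distrib_right mult_ac cong: sum_lessThan_cong)
        (rule sum.swap)
    also have "\<dots> = (\<Sum>b<d. (\<Sum>r<N. \<mu> i j r * rho r a b) * v b)"
      using m True \<open>i < N\<close> \<open>j < N\<close> by (intro sum_lessThan_cong) (simp add: is_module_def)
    also have "\<dots> = (\<Sum>r<N. vscale (\<mu> i j r) (act d rho r v)) a"
      using True by (simp add: sum_fun_apply act_def sum_distrib_left sum_distrib_right mult_ac)
        (rule sum.swap)
    finally show ?thesis .
  qed (simp add: act_def sum_fun_apply)
qed

lemma module_act_heta:
  assumes m: "is_module H d rho" and v: "v \<in> vecs d"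
  shows "(\<Sum>r<N. vscale (\<eta> r) (act d rho r v)) = v"
proof
  fix a
  show "(\<Sum>r<N. vscale (\<eta> r) (act d rho r v)) a = v a"
  proof (cases "a < d")
    case True
    have "(\<Sum>r<N. vscale (\<eta> r) (act d rho r v)) a = (\<Sum>b<d. (\<Sum>r<N. \<eta> r * rho r a b) * v b)"
      using True by (simp add: sum_fun_apply act_def sum_distrib_left sum_distrib_right mult_ac)
        (rule sum.swap)
    also have "\<dots> = (\<Sum>b<d. kd a b * v b)"
      using m True by (intro sum_lessThan_cong) (simp add: is_module_def)
    also have "\<dots> = v a" using True by (simp add: kd_def eq_commute[of a] sum_lessThan_delta')
    finally show ?thesis .
  qed (use v in \<open>simp add: act_def sum_fun_apply vecs_def\<close>)
qed

lemma is_moduleI: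
  assumes act_act: "\<And>i j v. i < N \<Longrightarrow> j < N \<Longrightarrow> v \<in> vecs d \<Longrightarrow>
      act d rho i (act d rho j v) = (\<Sum>r<N. vscale (\<mu> i j r) (act d rho r v))"
    and unit: "\<And>v. v \<in> vecs d \<Longrightarrow> (\<Sum>r<N. vscale (\<eta> r) (act d rho r v)) = v"
  shows "is_module H d rho"
  unfolding is_module_def
proof (intro conjI allI impI)
  fix i j a b assume "i < N" "j < N" "a < d" "b < d"
  have "act d rho i (act d rho j (basis_vec b)) a = (\<Sum>c<d. rho i a c * rho j c b)"
    using \<open>a < d\<close> \<open>b < d\<close> by (simp add: act_def[of d rho i] act_basis_vec cong: sum_lessThan_cong)
  moreover have "(\<Sum>r<N. vscale (\<mu> i j r) (act d rho r (basis_vec b))) a = (\<Sum>r<N. \<mu> i j r * rho r a b)"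
    using \<open>a < d\<close> \<open>b < d\<close> by (simp add: sum_fun_apply act_basis_vec)
  ultimately show "(\<Sum>c<d. rho i a c * rho j c b) = (\<Sum>r<N. \<mu> i j r * rho r a b)"
    using act_act[OF \<open>i < N\<close> \<open>j < N\<close> basis_vec_vecs[OF \<open>b < d\<close>]] by simp
next
  fix a b assume "a < d" "b < d"
  have "(\<Sum>r<N. vscale (\<eta> r) (act d rho r (basis_vec b))) a = (\<Sum>r<N. \<eta> r * rho r a b)"
    using \<open>a < d\<close> \<open>b < d\<close> by (simp add: sum_fun_apply act_basis_vec)
  then show "(\<Sum>r<N. \<eta> r * rho r a b) = kd a b"
    using unit[OF basis_vec_vecs[OF \<open>b < d\<close>]] by (simp add: basis_vec_def kd_def)
qed

lemma is_module_restrict_module: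
  assumes m: "is_module H d rho"
    and B: "coords.independent B" "bij_betw \<beta> {..<card B} B" "coords.span B \<subseteq> vecs d"
    and inv: "\<And>i w. i < N \<Longrightarrow> w \<in> coords.span B \<Longrightarrow> act d rho i w \<in> coords.span B"
  shows "is_module H (card B) (restrict_module d rho \<beta> B)"
proof (rule is_moduleI)
  let ?emb = "\<lambda>v. \<Sum>b<card B. vscale (v b) (\<beta> b)"
  have emb: "?emb v \<in> coords.span B" for v
    using B(2) by (intro coords.span_sum coords.span_scale coords.span_base) (auto simp: bij_betw_def)
  fix i j and v :: "nat \<Rightarrow> 'k" assume ij: "i < N" "j < N"
  have "act (card B) (restrict_module d rho \<beta> B) i (act (card B) (restrict_module d rho \<beta> B) j v)
      = coord_of \<beta> B (act d rho i (act d rho j (?emb v)))"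
    using ij inv sum_coord_of[OF B(1,2) inv[OF ij(2) emb]] by (simp add: act_restrict_module[OF B(1,2)])
  also have "\<dots> = coord_of \<beta> B (\<Sum>k<N. vscale (\<mu> i j k) (act d rho k (?emb v)))"
    by (simp add: module_act_act[OF m ij])
  also have "\<dots> = (\<Sum>k<N. vscale (\<mu> i j k) (act (card B) (restrict_module d rho \<beta> B) k v))"
    by (rule sum_act_restrict_module[OF B(1,2), symmetric]) (use inv in auto)
  finally show "act (card B) (restrict_module d rho \<beta> B) i (act (card B) (restrict_module d rho \<beta> B) j v)
      = (\<Sum>k<N. vscale (\<mu> i j k) (act (card B) (restrict_module d rho \<beta> B) k v))" .
next
  fix v :: "nat \<Rightarrow> 'k" assume "v \<in> vecs (card B)"
  then show "(\<Sum>k<N. vscale (\<eta> k) (act (card B) (restrict_module d rho \<beta> B) k v)) = v"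
    using inv B(3) by (intro restrict_module_acts_as_identity[OF B(1,2)] module_act_heta[OF m]) auto
qed

lemma submodule_transport:
  assumes m: "is_module H d rho" and W: "W \<subseteq> vecs d" "coords.subspace W"
    and inv: "\<And>i w. i < N \<Longrightarrow> w \<in> W \<Longrightarrow> act d rho i w \<in> W"
    and B: "coords.independent B" "B \<subseteq> W" "W \<subseteq> coords.span B" "finite B"
    and e: "\<And>w. w \<in> W \<Longrightarrow> (\<Sum>i<N. vscale (e i) (act d rho i w)) = w"
  shows "\<exists>rho'. is_module H (card B) rho' \<and>
           (\<forall>v\<in>vecs (card B). (\<Sum>i<N. vscale (e i) (act (card B) rho' i v)) = v)"
proof -
  obtain \<beta> where \<beta>: "bij_betw \<beta> {..<card B} B"
    using ex_bij_betw_nat_finite[OF B(4)] unfolding atLeast0LessThan by blast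
  have "coords.span B = W" using B(2,3) coords.span_minimal[OF _ W(2)] by blast
  then have "is_module H (card B) (restrict_module d rho \<beta> B)"
    and "\<forall>v\<in>vecs (card B). (\<Sum>i<N. vscale (e i) (act (card B) (restrict_module d rho \<beta> B) i v)) = v"
    using inv W(1) e by (auto intro!: is_module_restrict_module[OF m B(1) \<beta>] restrict_module_acts_as_identity[OF B(1) \<beta>])
  then show ?thesis by blast
qed

lemma exists_irreducible_module_with_unit:
  assumes "is_module H d rho" "0 < d" "\<And>v. v \<in> vecs d \<Longrightarrow> (\<Sum>i<N. vscale (e i) (act d rho i v)) = v"
  shows "\<exists>d' rho'. irreducible_module H d' rho' \<and> (\<forall>v\<in>vecs d'. (\<Sum>i<N. vscale (e i) (act d' rho' i v)) = v)"
  using assms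
proof (induction d arbitrary: rho rule: less_induct)
  case (less d)
  show ?case
  proof (cases "irreducible_module H d rho")
    case False
    then obtain W where W: "submodule H d rho W" "W \<noteq> {\<lambda>_. 0}" "W \<noteq> vecs d"
      using less.prems(1,2) unfolding irreducible_module_def by blast
    have W_vecs: "W \<subseteq> vecs d" and W_sub: "coords.subspace W"
      using W(1) by (auto simp: submodule_def lin_subspace_iff)
    have inv: "\<And>i w. i < N \<Longrightarrow> w \<in> W \<Longrightarrow> act d rho i w \<in> W"
      using W(1) by (auto simp: submodule_def invariant_def)
    obtain B where B: "B \<subseteq> W" "coords.independent B" "W \<subseteq> coords.span B" "finite B" "card B \<le> d"
      by (rule finite_basis_of_subset_vecs[OF W_vecs])
    have "card B < d" by (rule card_independent_lt[OF B(2,1) W_vecs W_sub W(3)])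
    moreover have "0 < card B"
      using B(3,4) W(2) coords.subspace_0[OF W_sub] by (intro card_pos_if_span_nonzero) (auto simp: zero_fun_def)
    moreover obtain rho' where "is_module H (card B) rho'"
        "\<forall>v\<in>vecs (card B). (\<Sum>i<N. vscale (e i) (act (card B) rho' i v)) = v"
      using submodule_transport[OF less.prems(1) W_vecs W_sub inv B(2,1,3,4)] less.prems(3) W_vecs by blast
    ultimately show ?thesis using less.IH by blast
  qed (use less.prems(3) in blast)
qed

section \<open>One-dimensional modules\<close>

definition one_dim_module :: "(nat \<Rightarrow> 'k) \<Rightarrow> nat \<Rightarrow> nat \<Rightarrow> nat \<Rightarrow> 'k" where
  "one_dim_module \<sigma> = (\<lambda>i a b. \<sigma> i)"

lemma is_module_one_dim_module: "grouplike \<sigma> \<Longrightarrow> is_module H 1 (one_dim_module \<sigma>)"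
  by (simp add: is_module_def grouplike_dual_def one_dim_module_def kd_def)

lemma character_one_dim_module: "grouplike \<sigma> \<Longrightarrow> character H 1 (one_dim_module \<sigma>) = \<sigma>"
  using grouplike_vecs by (auto simp: character_def one_dim_module_def fun_eq_iff vecs_def)

lemma grouplike_character_one_dim: "is_module H 1 rho \<Longrightarrow> grouplike (character H 1 rho)"
proof -
  have "(\<Sum>r<N. f r * (if r < N then rho r 0 0 else 0)) = (\<Sum>r<N. f r * rho r 0 0)" for f :: "nat \<Rightarrow> 'k"
    by (rule sum_lessThan_cong) simp
  then show "is_module H 1 rho \<Longrightarrow> grouplike (character H 1 rho)"
    by (auto simp: is_module_def grouplike_dual_def character_def vecs_def kd_def)
qed

lemma irreducible_if_dim_1: assumes "is_module H 1 rho" shows "irreducible_module H 1 rho"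
  unfolding irreducible_module_def
proof (intro conjI allI impI)
  fix W assume "submodule H 1 rho W"
  then have W: "W \<subseteq> vecs 1" "coords.subspace W" by (auto simp: submodule_def lin_subspace_iff)
  show "W = {\<lambda>_. 0} \<or> W = vecs 1"
  proof (cases "\<exists>w\<in>W. w 0 \<noteq> 0")
    case True
    then obtain w where w: "w \<in> W" "w 0 \<noteq> 0" by blast
    have "v \<in> W" if "v \<in> vecs 1" for v
    proof -
      have "v = vscale (v 0 / w 0) w"
      proof
        fix a show "v a = vscale (v 0 / w 0) w a"
          using that w W(1) by (cases "a = 0") (auto simp: vecs_def)
      qed
      then show ?thesis using coords.subspace_scale[OF W(2) w(1)] by metis
    qed
    then show ?thesis using W(1) by blast
  next
    case False
    have "w = (\<lambda>_. 0)" if "w \<in> W" for w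
    proof
      fix a show "w a = 0" using False that W(1) by (cases "a = 0") (auto simp: vecs_def)
    qed
    then have "W \<subseteq> {\<lambda>_. 0}" by blast
    then show ?thesis using coords.subspace_0[OF W(2)] by (auto simp: zero_fun_def)
  qed
qed (use assms in simp_all)

lemma LKer_one_dim: "LKer H 1 rho = {h \<in> vecs N. hit (character H 1 rho) h = h}"
proof -
  have eq: "(\<Sum>i<N. h i * (\<Sum>q<N. \<delta> i p q * (rho q 0 0 * v 0))) = hit (character H 1 rho) h p * v 0"
    if "p < N" for h v p
    using that by (simp add: hit_def character_def sum_distrib_left sum_distrib_right mult_ac
        if_distrib[of "\<lambda>x. _ * x"] cong: if_cong)
  show ?thesis
  proof (intro set_eqI iffI)
    fix h assume h: "h \<in> LKer H 1 rho"
    have "hit (character H 1 rho) h p = h p" if "p < N" for p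
      using h that eq[OF that, of h "basis_vec 0"] basis_vec_vecs[of 0 1]
      unfolding LKer_def by (auto simp: basis_vec_def)
    with h show "h \<in> {h \<in> vecs N. hit (character H 1 rho) h = h}"
      by (auto simp: LKer_def fun_eq_iff hit_def vecs_def)
  qed (auto simp: LKer_def eq vecs_def)
qed

section \<open>Powers of a grouplike spanning the dual\<close>

lemma hit_dpow_annihilator:
  assumes "x \<in> annihilator (range (dpow H \<sigma>))"
  shows "hit (dpow H \<sigma> m) x \<in> annihilator (range (dpow H \<sigma>))"
proof -
  have "pairing (dpow H \<sigma> k) (hit (dpow H \<sigma> m) x) = 0" for k
    using assms by (simp add: pairing_conv[symmetric] dpow_add[symmetric] annihilator_def)
  then show ?thesis by (auto simp: annihilator_def hit_vecs)
qed

lemma pairing_dpow_hit_fixed: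
  assumes "grouplike \<sigma>" "hit \<sigma> h = h"
  shows "pairing (dpow H \<sigma> m) h = pairing (dual_one H) h"
proof (induction m)
  case (Suc m)
  then show ?case using assms by (simp add: dpow_Suc'[OF grouplike_vecs] pairing_conv)
qed (simp add: dpow_0)

lemma span_dpow_if_hit_fixed_scalar:
  assumes ss: "semisimple H" and \<sigma>: "grouplike \<sigma>"
    and fixed: "\<And>h. h \<in> vecs N \<Longrightarrow> hit \<sigma> h = h \<Longrightarrow> \<exists>c. h = vscale c (hone H)"
  shows "coords.span (range (dpow H \<sigma>)) = vecs N"
proof (rule span_eq_vecs_if_annihilator_trivial)
  show "range (dpow H \<sigma>) \<subseteq> vecs N" using dpow_vecs by blast
  let ?I = "annihilator (range (dpow H \<sigma>))"
  have G: "range (dpow H \<sigma>) \<subseteq> {\<sigma>. grouplike \<sigma>}" using grouplike_dpow[OF \<sigma>] by blast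
  obtain e where e: "e \<in> ?I" "\<forall>x\<in>?I. hmul x e = x \<and> hmul e x = x"
    using ideal_unit[OF ss left_ideal_annihilator[OF G] annihilator_hmul_right[OF G]] by blast
  obtain m where "0 < m" "dpow H \<sigma> m = dual_one H" using grouplike_finite_order[OF \<sigma>] by blast
  then have "conv H \<sigma> (dpow H \<sigma> (m - 1)) = dual_one H"
    using dpow_Suc[of \<sigma> "m - 1"] by simp
  then have hit_inverse: "hit \<sigma> (hit (dpow H \<sigma> (m - 1)) x) = x" if "x \<in> vecs N" for x
    using that by (simp add: hit_hit hit_dual_one)
  have hit_e_left_unit: "hmul (hit \<sigma> e) z = z" if "z \<in> ?I" for z
  proof -
    let ?z = "hit (dpow H \<sigma> (m - 1)) z"
    have "hmul (hit \<sigma> e) z = hit \<sigma> (hmul e ?z)"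
      using hit_inverse[of z] that by (simp add: hit_hmul[OF \<sigma>] annihilator_def)
    also have "\<dots> = z"
      using e(2) hit_dpow_annihilator[OF that] hit_inverse[of z] that by (simp add: annihilator_def)
    finally show ?thesis .
  qed
  have "hit \<sigma> e \<in> ?I" using hit_dpow_annihilator[OF e(1), of 1] dpow_1[OF grouplike_vecs[OF \<sigma>]] by simp
  then have "hit \<sigma> e = e" using e hit_e_left_unit by metis
  then obtain c where c: "e = vscale c (hone H)" using fixed e(1) by (auto simp: annihilator_def)
  have "dual_one H \<in> range (dpow H \<sigma>)" using dpow_0[of \<sigma>] by (metis rangeI)
  then have "pairing (dual_one H) e = 0" using e(1) by (auto simp: annihilator_def)
  then have "e = 0" using c pairing_hone[OF grouplike_dual_one] by (auto simp: pairing_vscale_right)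
  then show "?I \<subseteq> {0}" using e(2) by auto
qed

lemma span_dpow_if_faithful:
  assumes "semisimple H" "is_module H 1 rho" "faithful_char H 1 rho"
  shows "coords.span (range (dpow H (character H 1 rho))) = vecs N"
proof (rule span_dpow_if_hit_fixed_scalar[OF assms(1) grouplike_character_one_dim[OF assms(2)]])
  fix h assume "h \<in> vecs N" "hit (character H 1 rho) h = h"
  then have "h \<in> LKer H 1 rho" unfolding LKer_one_dim by simp
  then show "\<exists>c. h = vscale c (hone H)" using assms(3) by (auto simp: faithful_char_def vscale_def)
qed

lemma faithful_one_dim_if_span_dpow:
  assumes \<sigma>: "grouplike \<sigma>" and span: "coords.span (range (dpow H \<sigma>)) = vecs N"
  shows "faithful_char H 1 (one_dim_module \<sigma>)"
  unfolding faithful_char_def LKer_one_dim character_one_dim_module[OF \<sigma>]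
proof (intro set_eqI iffI)
  fix h assume "h \<in> {h \<in> vecs N. hit \<sigma> h = h}"
  then have h: "h \<in> vecs N" "hit \<sigma> h = h" by auto
  define c where "c = pairing (dual_one H) h"
  have "pairing (dpow H \<sigma> m) (h - vscale c (hone H)) = 0" for m
    using pairing_dpow_hit_fixed[OF \<sigma> h(2)] pairing_hone[OF grouplike_dpow[OF \<sigma>]]
    by (simp add: pairing_diff_right pairing_vscale_right c_def)
  then have "pairing f (h - vscale c (hone H)) = 0" if "f \<in> vecs N" for f
    using that span by (intro pairing_span_eq_0[of f "range (dpow H \<sigma>)"]) auto
  then have "h - vscale c (hone H) = 0"
    using h(1) hone_vecs by (intro vecs_eqI_pairing_left) (auto simp: vecs_def)
  then show "h \<in> {\<lambda>l. c * hone H l |c. True}" by (auto simp: vscale_def)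
next
  fix h assume "h \<in> {\<lambda>l. c * hone H l |c. True}"
  then obtain c where "h = vscale c (hone H)" by (auto simp: vscale_def)
  then show "h \<in> {h \<in> vecs N. hit \<sigma> h = h}"
    by (simp add: hit_vscale hit_hone[OF \<sigma>] vecs_vscale hone_vecs)
qed

lemma RH_eq_span_dpow_if_span:
  assumes \<sigma>: "grouplike \<sigma>" and span: "coords.span (range (dpow H \<sigma>)) = vecs N"
  shows "RH H = lin_span (range (dpow H \<sigma>))"
proof -
  let ?C = "{character H d rho | d rho. irreducible_module H d rho}"
  have "dpow H \<sigma> m \<in> ?C" for m
  proof -
    have g: "grouplike (dpow H \<sigma> m)" by (rule grouplike_dpow[OF \<sigma>])
    then have "irreducible_module H 1 (one_dim_module (dpow H \<sigma> m))"
      by (intro irreducible_if_dim_1 is_module_one_dim_module)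
    then show ?thesis using character_one_dim_module[OF g]
      by (intro CollectI exI[of _ 1] exI[of _ "one_dim_module (dpow H \<sigma> m)"]) simp
  qed
  then have "coords.span (range (dpow H \<sigma>)) \<subseteq> coords.span ?C" by (intro coords.span_mono) blast
  moreover have "coords.span ?C \<subseteq> vecs N"
    by (intro coords.span_minimal vecs_subspace) (auto simp: character_def vecs_def)
  ultimately show ?thesis using span by (simp add: RH_def lin_span_eq_span)
qed

lemma pairing_character_unit:
  assumes "\<And>v. v \<in> vecs d \<Longrightarrow> (\<Sum>i<N. vscale (e i) (act d rho i v)) = v"
  shows "pairing (character H d rho) e = of_nat d"
proof -
  have diag: "(\<Sum>i<N. e i * rho i a a) = 1" if "a < d" for a
    using fun_cong[OF assms[OF basis_vec_vecs[OF that]], of a] that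
    by (simp add: sum_fun_apply act_basis_vec) (simp add: basis_vec_def)
  have "pairing (character H d rho) e = (\<Sum>i<N. e i * (\<Sum>a<d. rho i a a))"
    by (simp add: pairing_def character_def mult.commute)
  also have "\<dots> = (\<Sum>a<d. \<Sum>i<N. e i * rho i a a)"
    by (simp add: sum_distrib_left) (rule sum.swap)
  also have "\<dots> = of_nat d" using diag by simp
  finally show ?thesis .
qed

lemma exists_irreducible_in_left_ideal:
  assumes I: "left_ideal I" "\<not> I \<subseteq> {0}" and e: "\<And>x. x \<in> I \<Longrightarrow> hmul e x = x"
  shows "\<exists>d rho. irreducible_module H d rho \<and> (\<forall>v\<in>vecs d. (\<Sum>i<N. vscale (e i) (act d rho i v)) = v)"
proof -
  have I_vecs: "I \<subseteq> vecs N" and I_sub: "coords.subspace I" using I(1) by (auto simp: left_ideal_def)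
  have inv: "\<And>i w. i < N \<Longrightarrow> w \<in> I \<Longrightarrow> act N left_regular i w \<in> I"
    using I(1) by (simp add: act_left_regular left_ideal_def)
  have e_acts: "(\<Sum>i<N. vscale (e i) (act N left_regular i w)) = w" if "w \<in> I" for w
  proof -
    have "(\<Sum>i<N. vscale (e i) (act N left_regular i w)) = (\<Sum>i<N. vscale (e i) (hmul (basis_vec i) w))"
      by (intro sum_lessThan_cong) (simp add: act_left_regular)
    also have "\<dots> = w" using e[OF that] by (simp add: hmul_eq_sum_basis[symmetric])
    finally show ?thesis .
  qed
  obtain B where B: "B \<subseteq> I" "coords.independent B" "I \<subseteq> coords.span B" "finite B" "card B \<le> N"
    by (rule finite_basis_of_subset_vecs[OF I_vecs])
  obtain rho where rho: "is_module H (card B) rho"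
      "\<forall>v\<in>vecs (card B). (\<Sum>i<N. vscale (e i) (act (card B) rho i v)) = v"
    using submodule_transport[OF left_regular_module I_vecs I_sub inv B(2,1,3,4) e_acts] by blast
  have "0 < card B" using card_pos_if_span_nonzero[OF B(4,3) I(2)] .
  moreover have "(\<Sum>i<N. vscale (e i) (act (card B) rho i v)) = v" if "v \<in> vecs (card B)" for v
    using rho(2) that by blast
  ultimately show ?thesis using exists_irreducible_module_with_unit[OF rho(1)] by blast
qed

lemma span_dpow_if_RH_eq:
  assumes ss: "semisimple H" and \<sigma>: "grouplike \<sigma>" and R: "RH H = lin_span (range (dpow H \<sigma>))"
  shows "coords.span (range (dpow H \<sigma>)) = vecs N"
proof (rule span_eq_vecs_if_annihilator_trivial)
  show "range (dpow H \<sigma>) \<subseteq> vecs N" using dpow_vecs by blast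
  let ?I = "annihilator (range (dpow H \<sigma>))"
  show "?I \<subseteq> {0}"
  proof (rule ccontr)
    assume nonzero: "\<not> ?I \<subseteq> {0}"
    have G: "range (dpow H \<sigma>) \<subseteq> {\<sigma>. grouplike \<sigma>}" using grouplike_dpow[OF \<sigma>] by blast
    have I: "left_ideal ?I" by (rule left_ideal_annihilator[OF G])
    obtain e where e: "e \<in> ?I" "\<forall>x\<in>?I. hmul x e = x \<and> hmul e x = x"
      using ideal_unit[OF ss I annihilator_hmul_right[OF G]] by blast
    then obtain d rho where irr: "irreducible_module H d rho"
        and unit: "\<forall>v\<in>vecs d. (\<Sum>i<N. vscale (e i) (act d rho i v)) = v"
      using exists_irreducible_in_left_ideal[OF I nonzero] by blast
    have "character H d rho \<in> RH H"
      unfolding RH_def lin_span_eq_span using irr by (intro coords.span_base) blast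
    then have "character H d rho \<in> coords.span (range (dpow H \<sigma>))"
      using R by (simp add: lin_span_eq_span)
    then have "pairing (character H d rho) e = 0"
      by (rule pairing_span_eq_0) (use e(1) in \<open>auto simp: annihilator_def\<close>)
    moreover have "0 < d" using irr by (simp add: irreducible_module_def)
    ultimately show False using pairing_character_unit[where d=d and rho=rho and e=e] unit by simp
  qed
qed

end

theorem corollary3p9:
  fixes H :: "'k::field_char_0 hopf_data"
  assumes "alg_closed TYPE('k)"
    and "hopf_algebra H"
    and "semisimple H"
  shows "((\<exists>rho. is_module H 1 rho \<and> faithful_char H 1 rho) \<longleftrightarrow>
           (\<exists>\<sigma>. grouplike_dual H \<sigma> \<and> RH H = lin_span (range (dpow H \<sigma>)))) \<and>
         ((\<exists>\<sigma>. grouplike_dual H \<sigma> \<and> RH H = lin_span (range (dpow H \<sigma>))) \<longleftrightarrow>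
           (\<exists>\<sigma>. grouplike_dual H \<sigma> \<and> lin_span (range (dpow H \<sigma>)) = vecs (hdim H)))"
proof -
  interpret hopf H by (rule hopf.intro) (rule assms(2))
  let ?spans = "\<lambda>\<sigma>. grouplike \<sigma> \<and> lin_span (range (dpow H \<sigma>)) = vecs N"
  have i_iff_iii: "(\<exists>rho. is_module H 1 rho \<and> faithful_char H 1 rho) \<longleftrightarrow> (\<exists>\<sigma>. ?spans \<sigma>)"
  proof
    assume "\<exists>rho. is_module H 1 rho \<and> faithful_char H 1 rho"
    then show "\<exists>\<sigma>. ?spans \<sigma>"
      using grouplike_character_one_dim span_dpow_if_faithful[OF assms(3)] by (auto simp: lin_span_eq_span)
  next
    assume "\<exists>\<sigma>. ?spans \<sigma>"
    then show "\<exists>rho. is_module H 1 rho \<and> faithful_char H 1 rho"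
      using is_module_one_dim_module faithful_one_dim_if_span_dpow by (auto simp: lin_span_eq_span)
  qed
  have ii_iff_iii: "(\<exists>\<sigma>. grouplike \<sigma> \<and> RH H = lin_span (range (dpow H \<sigma>))) \<longleftrightarrow> (\<exists>\<sigma>. ?spans \<sigma>)"
  proof
    assume "\<exists>\<sigma>. grouplike \<sigma> \<and> RH H = lin_span (range (dpow H \<sigma>))"
    then show "\<exists>\<sigma>. ?spans \<sigma>" using span_dpow_if_RH_eq[OF assms(3)] by (auto simp: lin_span_eq_span)
  next
    assume "\<exists>\<sigma>. ?spans \<sigma>"
    then show "\<exists>\<sigma>. grouplike \<sigma> \<and> RH H = lin_span (range (dpow H \<sigma>))"
      using RH_eq_span_dpow_if_span by (auto simp: lin_span_eq_span)
  qed
  show ?thesis by (simp only: i_iff_iii ii_iff_iii)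
qed

end
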